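(* Let $(\mathsf X_n,\mathrm d_n)_{n\in\mathbb N}$ be finite metric spaces with $|\mathsf X_n|=n$, all $(C,\delta)$-finite-Ahlfors regular for fixed constants $0<C<\infty$, $1\le\delta\le\infty$. Assume there is a constant $K$ independent of $n$ such that for each $n$: (1) $\mathsf X_n$ is $K$-coarsely isometric to a subset of a Euclidean space of dimension $\nu$ independent of $n$; and (2) for any two points $i,j\in\mathsf X_n$ and any $a\in[0,1]$ there is an interpolant $g\in\mathsf X_n$ with $|\mathrm d_n(i,g)-a\,\mathrm d_n(i,j)|\le K$ and $|\mathrm d_n(g,j)-(1-a)\,\mathrm d_n(i,j)|\le K$. Fix an integer $k\ge2$ and let $\mathcal C_n$ be a partition of $\mathsf X_n$ returned by the $k$-medoids algorithm applied to $(\mathsf X_n,\mathrm d_n)$. Then the sequence $(\mathcal C_n)_{n\in\mathbb N}$ satisfies: (i) $\liminf_{n\to\infty}\min_{\mathsf C\in\mathcal C_n}|\mathsf C|/\max_{\mathsf D\in\mathcal C_n}|\mathsf D|>0$; and (ii) there is a sequence $\bar r_n\nearrow\infty$ with $\lim_{n\to\infty}\max_{\mathsf C\in\mathcal C_n}|\{i\in\mathsf C:\mathrm d_n(i,\mathsf X_n\setminus\mathsf C)\le\bar r_n\}|/\min_{\mathsf D\in\mathcal C_n}|\mathsf D|=0$.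
   Context: A finite metric space $(\mathsf X,\mathrm d)$ is $(C,\delta)$-finite-Ahlfors regular if for every $i\in\mathsf X$ and $r>0$, $\min(|\mathsf X|,C^{-1}r^\delta)\le|\mathsf B_{\mathsf X,r}(i)|\le\max(Cr^\delta,1)$, with $\mathsf B_{\mathsf X,r}(i)$ the ball of radius $r$ about $i$. A map $f:(\mathsf Y,\mathrm d_{\mathsf Y})\to(\mathsf Z,\mathrm d_{\mathsf Z})$ is a $K$-coarse isometry if $\mathrm d_{\mathsf Z}(f(i),f(j))-K\le\mathrm d_{\mathsf Y}(i,j)\le\mathrm d_{\mathsf Z}(f(i),f(j))+K$ for all $i,j$. The $k$-medoids algorithm on a finite metric space $(\mathsf X,\mathrm d)$: for medoids $i_1,\dots,i_k\in\mathsf X$, each point is assigned to a cluster of a nearest medoid; the total cost is $\sum_{g}\sum_{j\in\mathsf C_g}\mathrm d(i_g,j)^2$. Initialize medoids arbitrarily; while the total cost decreases, for each $g\le k$ and each non-medoid $j$, compute the cost with medoid set $\{i_1,\dots,i_{g-1},j,i_{g+1},\dots,i_k\}$ and update to the new medoids if the total cost decreases. The output is the resulting partition into $k$ clusters. *)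

theory Defs
  imports "HOL-Analysis.Analysis" "HOL-Library.Extended_Real" "HOL-Library.Liminf_Limsup"
begin

text \<open>A finite metric space with n points is modelled on the carrier {..<n} of naturals.\<close>

definition fin_metric :: "nat set \<Rightarrow> (nat \<Rightarrow> nat \<Rightarrow> real) \<Rightarrow> bool" where
  "fin_metric X d \<longleftrightarrow> finite X \<and>
     (\<forall>i\<in>X. \<forall>j\<in>X. d i j = 0 \<longleftrightarrow> i = j) \<and>
     (\<forall>i\<in>X. \<forall>j\<in>X. d i j = d j i) \<and>
     (\<forall>i\<in>X. \<forall>j\<in>X. \<forall>l\<in>X. d i l \<le> d i j + d j l)"

definition mball :: "nat set \<Rightarrow> (nat \<Rightarrow> nat \<Rightarrow> real) \<Rightarrow> real \<Rightarrow> nat \<Rightarrow> nat set" where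
  "mball X d r i = {j\<in>X. d i j \<le> r}"

definition epow :: "real \<Rightarrow> ereal \<Rightarrow> ereal" where
  "epow r \<delta> = (case \<delta> of ereal e \<Rightarrow> ereal (r powr e)
      | PInfty \<Rightarrow> (if r > 1 then \<infinity> else if r = 1 then 1 else 0)
      | MInfty \<Rightarrow> 0)"

definition fin_ahlfors_regular ::
  "nat set \<Rightarrow> (nat \<Rightarrow> nat \<Rightarrow> real) \<Rightarrow> real \<Rightarrow> ereal \<Rightarrow> bool" where
  "fin_ahlfors_regular X d C \<delta> \<longleftrightarrow>
     (\<forall>i\<in>X. \<forall>r>0.
        min (ereal (real (card X))) (ereal (inverse C) * epow r \<delta>)
          \<le> ereal (real (card (mball X d r i))) \<and>
        ereal (real (card (mball X d r i))) \<le> max (ereal C * epow r \<delta>) 1)"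

definition coarse_isometry ::
  "nat set \<Rightarrow> (nat \<Rightarrow> nat \<Rightarrow> real) \<Rightarrow> ('b \<Rightarrow> 'b \<Rightarrow> real) \<Rightarrow> real \<Rightarrow> (nat \<Rightarrow> 'b) \<Rightarrow> bool" where
  "coarse_isometry Y dY dZ K f \<longleftrightarrow>
     (\<forall>i\<in>Y. \<forall>j\<in>Y. dZ (f i) (f j) - K \<le> dY i j \<and> dY i j \<le> dZ (f i) (f j) + K)"

text \<open>k-medoids. Medoids are a list ms (ms ! g is the medoid of cluster g).\<close>

definition nearest_assignment ::
  "(nat \<Rightarrow> nat \<Rightarrow> real) \<Rightarrow> nat set \<Rightarrow> nat list \<Rightarrow> (nat \<Rightarrow> nat set) \<Rightarrow> bool" where
  "nearest_assignment d X ms Cl \<longleftrightarrow>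
     (\<forall>g<length ms. Cl g \<subseteq> X) \<and>
     (\<forall>j\<in>X. \<exists>!g. g < length ms \<and> j \<in> Cl g) \<and>
     (\<forall>g<length ms. \<forall>j\<in>Cl g. \<forall>h<length ms. d (ms ! g) j \<le> d (ms ! h) j)"

definition kmedoids_cost :: "(nat \<Rightarrow> nat \<Rightarrow> real) \<Rightarrow> nat set \<Rightarrow> nat list \<Rightarrow> real" where
  "kmedoids_cost d X ms =
     (let Cl = (SOME Cl. nearest_assignment d X ms Cl)
      in (\<Sum>g<length ms. \<Sum>j\<in>Cl g. (d (ms ! g) j)^2))"

definition kmedoids_swap :: "(nat \<Rightarrow> nat \<Rightarrow> real) \<Rightarrow> nat set \<Rightarrow> nat list \<Rightarrow> nat list \<Rightarrow> bool" where
  "kmedoids_swap d X ms ms' \<longleftrightarrow>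
     (\<exists>g<length ms. \<exists>j\<in>X. j \<notin> set ms \<and> ms' = ms[g := j] \<and>
        kmedoids_cost d X ms' < kmedoids_cost d X ms)"

definition kmedoids_output :: "(nat \<Rightarrow> nat \<Rightarrow> real) \<Rightarrow> nat set \<Rightarrow> nat \<Rightarrow> (nat \<Rightarrow> nat set) \<Rightarrow> bool" where
  "kmedoids_output d X k Cl \<longleftrightarrow>
     (\<exists>ms0 ms. length ms0 = k \<and> distinct ms0 \<and> set ms0 \<subseteq> X \<and>
        (kmedoids_swap d X)\<^sup>*\<^sup>* ms0 ms \<and> \<not> (\<exists>ms'. kmedoids_swap d X ms ms') \<and>
        nearest_assignment d X ms Cl)"

definition setdist :: "(nat \<Rightarrow> nat \<Rightarrow> real) \<Rightarrow> nat \<Rightarrow> nat set \<Rightarrow> real" where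
  "setdist d i S = (INF j\<in>S. d i j)"

end

theory Submission
  imports Defs
begin

(*
  Ahlfors regularity forces the exponent to be finite and every ball of radius r to contain
  about r^e points, so the diameter is of order n^(1/e).  If a cluster were small, moving its medoid next to
  the far points of a largest cluster would save order n^(1 + 2/e) on them while reassigning the
  small cluster costs only its size times n^(2/e); so all clusters have size of order n, and
  the same swap shows that distinct medoids are at distance of order n^(1/e).

  Points of cluster g within distance r of cluster h lie in the band where
  d (medoid h) - d (medoid g) is at most 2r.  From each point of a band, an interpolant towards
  medoid g enters a region where this difference is much larger: up to the additive error K the
  embedding is Euclidean and the angle at the point is bounded below.  The balls around these
  interpolants are disjoint from the band, contained in a band of proportionally larger width, and
  by Ahlfors regularity each has many points; so widening the band by a constant factor increases
  its size by a constant factor.  As the width can grow from n^(1/(2e)) up to order n^(1/e), a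
  band of width n^(1/(2e)) has o(n) points.
*)

definition point_cost :: "(nat \<Rightarrow> nat \<Rightarrow> real) \<Rightarrow> nat list \<Rightarrow> nat \<Rightarrow> real" where
  "point_cost d ms j = (Min ((\<lambda>g. d (ms ! g) j) ` {..<length ms}))^2"

lemma nearest_assignment_exists:
  assumes "ms \<noteq> []"
  shows "\<exists>Cl. nearest_assignment d X ms Cl"
proof -
  define P where "P j g \<longleftrightarrow> g < length ms \<and> (\<forall>h<length ms. d (ms ! g) j \<le> d (ms ! h) j)" for j g
  have "\<exists>g. P j g" for j
  proof -
    have "Min ((\<lambda>g. d (ms ! g) j) ` {..<length ms}) \<in> (\<lambda>g. d (ms ! g) j) ` {..<length ms}"
      using assms by (intro Min_in) auto
    then obtain g where "g < length ms" "d (ms ! g) j = Min ((\<lambda>g. d (ms ! g) j) ` {..<length ms})"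
      by auto
    then show ?thesis unfolding P_def by (intro exI[of _ g]) auto
  qed
  then have least: "P j (LEAST g. P j g)" for j by (meson LeastI_ex)
  define Cl where "Cl g = {j\<in>X. g = (LEAST g. P j g)}" for g
  have "nearest_assignment d X ms Cl"
    unfolding nearest_assignment_def
  proof (intro conjI allI impI ballI)
    show "Cl g \<subseteq> X" for g unfolding Cl_def by auto
    show "\<exists>!g. g < length ms \<and> j \<in> Cl g" if "j \<in> X" for j
      using least[of j] that unfolding Cl_def P_def by auto
    show "d (ms ! g) j \<le> d (ms ! h) j" if "g < length ms" "j \<in> Cl g" "h < length ms" for g j h
      using least[of j] that unfolding Cl_def P_def by auto
  qed
  then show ?thesis by blast
qed

lemma point_cost_nearest:
  assumes "nearest_assignment d X ms Cl" "g < length ms" "j \<in> Cl g"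
  shows "point_cost d ms j = (d (ms ! g) j)^2"
proof -
  have "Min ((\<lambda>g. d (ms ! g) j) ` {..<length ms}) = d (ms ! g) j"
    using assms unfolding nearest_assignment_def by (intro Min_eqI) auto
  then show ?thesis unfolding point_cost_def by simp
qed

lemma point_cost_le:
  assumes "g < length ms" "\<And>h. h < length ms \<Longrightarrow> 0 \<le> d (ms ! h) j"
  shows "point_cost d ms j \<le> (d (ms ! g) j)^2"
proof -
  have "Min ((\<lambda>g. d (ms ! g) j) ` {..<length ms}) \<le> d (ms ! g) j"
    using assms by (intro Min_le) auto
  moreover have "0 \<le> Min ((\<lambda>g. d (ms ! g) j) ` {..<length ms})"
    using assms by (subst Min_ge_iff) auto
  ultimately show ?thesis unfolding point_cost_def by (simp add: power_mono)
qed

lemma kmedoids_cost_eq_sum_point_cost: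
  assumes "ms \<noteq> []" "finite X"
  shows "kmedoids_cost d X ms = (\<Sum>j\<in>X. point_cost d ms j)"
proof -
  define Cl where "Cl = (SOME Cl. nearest_assignment d X ms Cl)"
  have near: "nearest_assignment d X ms Cl"
    unfolding Cl_def using nearest_assignment_exists[OF assms(1)] by (rule someI_ex)
  then have "Cl g \<subseteq> X" if "g < length ms" for g
    using that unfolding nearest_assignment_def by blast
  then have fin: "finite (Cl g)" if "g < length ms" for g
    using assms(2) that by (meson finite_subset)
  have "kmedoids_cost d X ms = (\<Sum>g<length ms. \<Sum>j\<in>Cl g. point_cost d ms j)"
    unfolding kmedoids_cost_def Cl_def[symmetric] Let_def
    using point_cost_nearest[OF near] by (intro sum.cong) auto
  also have "\<dots> = (\<Sum>j\<in>(\<Union>g<length ms. Cl g). point_cost d ms j)"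
    using near fin unfolding nearest_assignment_def
    by (intro sum.UNION_disjoint[symmetric]) (auto simp: disjoint_iff, metis subsetD)
  also have "(\<Union>g<length ms. Cl g) = X"
    using near unfolding nearest_assignment_def by blast
  finally show ?thesis .
qed

lemma rtranclp_kmedoids_swap_medoids:
  assumes "(kmedoids_swap d X)\<^sup>*\<^sup>* ms0 ms" "distinct ms0" "set ms0 \<subseteq> X"
  shows "distinct ms \<and> set ms \<subseteq> X \<and> length ms = length ms0"
  using assms
proof (induction rule: rtranclp_induct)
  case base
  then show ?case by simp
next
  case (step y z)
  then obtain g j where "g < length y" "j \<in> X" "j \<notin> set y" "z = y[g := j]"
    unfolding kmedoids_swap_def by blast
  with step show ?case
    by (auto simp: distinct_list_update dest: subsetD[OF set_update_subset_insert])
qed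

lemma kmedoids_output_swap_optimal:
  assumes "kmedoids_output d X k Cl" "finite X" "1 \<le> k"
  obtains ms where "length ms = k" "distinct ms" "set ms \<subseteq> X" "nearest_assignment d X ms Cl"
    "\<And>g p. g < k \<Longrightarrow> p \<in> X \<Longrightarrow> p \<notin> set ms \<Longrightarrow>
       (\<Sum>j\<in>X. point_cost d ms j) \<le> (\<Sum>j\<in>X. point_cost d (ms[g:=p]) j)"
proof -
  obtain ms0 ms where ms0: "length ms0 = k" "distinct ms0" "set ms0 \<subseteq> X"
    and swaps: "(kmedoids_swap d X)\<^sup>*\<^sup>* ms0 ms" and final: "\<not> (\<exists>ms'. kmedoids_swap d X ms ms')"
    and near: "nearest_assignment d X ms Cl"
    using assms(1) unfolding kmedoids_output_def by blast
  have ms: "distinct ms" "set ms \<subseteq> X" "length ms = k"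
    using rtranclp_kmedoids_swap_medoids[OF swaps ms0(2,3)] ms0(1) by auto
  have "(\<Sum>j\<in>X. point_cost d ms j) \<le> (\<Sum>j\<in>X. point_cost d (ms[g:=p]) j)"
    if "g < k" "p \<in> X" "p \<notin> set ms" for g p
  proof -
    have "ms \<noteq> []" "ms[g:=p] \<noteq> []" using ms(3) assms(3) by auto
    moreover have "\<not> kmedoids_cost d X (ms[g := p]) < kmedoids_cost d X ms"
      using final that ms unfolding kmedoids_swap_def by blast
    ultimately show ?thesis using kmedoids_cost_eq_sum_point_cost assms(2) by fastforce
  qed
  with ms near show thesis using that by blast
qed

lemma double_counting_le:
  fixes M :: real
  assumes "finite S" "finite U" "\<And>x. x \<in> S \<Longrightarrow> H x \<subseteq> U"
    and "\<And>z. z \<in> U \<Longrightarrow> card {x\<in>S. z \<in> H x} \<le> M"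
  shows "(\<Sum>x\<in>S. real (card (H x))) \<le> card U * M"
proof -
  have "(\<Sum>x\<in>S. real (card (H x))) = (\<Sum>x\<in>S. \<Sum>z\<in>U. of_bool (z \<in> H x))"
  proof (rule sum.cong[OF refl])
    fix x assume "x \<in> S"
    then have "U \<inter> {z. z \<in> H x} = H x" using assms(3) by blast
    then show "real (card (H x)) = (\<Sum>z\<in>U. of_bool (z \<in> H x))" using assms(2) by simp
  qed
  also have "\<dots> = (\<Sum>z\<in>U. real (card {x\<in>S. z \<in> H x}))"
    using assms(1) by (subst sum.swap) (simp add: Int_def)
  also have "\<dots> \<le> card U * M" using sum_bounded_above[of U _ M] assms(4) by simp
  finally show ?thesis .
qed

locale ahlfors_space =
  fixes d :: "nat \<Rightarrow> nat \<Rightarrow> real" and n :: nat and C e :: real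
  assumes metric: "fin_metric {..<n} d"
    and ball_lower: "\<And>i r. i < n \<Longrightarrow> 0 < r \<Longrightarrow> min (real n) (r powr e / C) \<le> card (mball {..<n} d r i)"
    and ball_upper: "\<And>i r. i < n \<Longrightarrow> 0 < r \<Longrightarrow> card (mball {..<n} d r i) \<le> max (C * r powr e) 1"
    and e_ge_1: "1 \<le> e" and C_pos: "0 < C"
begin

lemma d_self: "i < n \<Longrightarrow> d i i = 0"
  using metric unfolding fin_metric_def by auto

lemma d_sym: "i < n \<Longrightarrow> j < n \<Longrightarrow> d i j = d j i"
  using metric unfolding fin_metric_def by auto

lemma d_triangle: "i < n \<Longrightarrow> j < n \<Longrightarrow> l < n \<Longrightarrow> d i l \<le> d i j + d j l"
  using metric unfolding fin_metric_def by auto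

lemma d_nonneg: "i < n \<Longrightarrow> j < n \<Longrightarrow> 0 \<le> d i j"
  using d_triangle[of i j i] d_self[of i] d_sym[of i j] by auto

lemma d_eq_0_imp_eq: "i < n \<Longrightarrow> j < n \<Longrightarrow> d i j = 0 \<Longrightarrow> i = j"
  using metric unfolding fin_metric_def by auto

definition diam_bound :: real where
  "diam_bound = (C * n) powr (1/e)"

lemma diam_bound_eq: "diam_bound = C powr (1/e) * n powr (1/e)"
  unfolding diam_bound_def using C_pos by (simp add: powr_mult)

lemma d_le_diam_bound:
  assumes "i < n" "j < n"
  shows "d i j \<le> diam_bound"
proof -
  have pos: "0 < C * n" using assms(1) C_pos by simp
  then have "0 < diam_bound" unfolding diam_bound_def powr_gt_zero by linarith
  moreover have "diam_bound powr e = (C * n) powr (1/e * e)"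
    unfolding diam_bound_def by (rule powr_powr)
  then have "diam_bound powr e = C * n" using pos e_ge_1 by simp
  then have "diam_bound powr e / C = n" using C_pos by simp
  ultimately have "real n \<le> card (mball {..<n} d diam_bound i)"
    using ball_lower[OF assms(1)] by fastforce
  then have "mball {..<n} d diam_bound i = {..<n}"
    by (intro card_seteq) (auto simp: mball_def)
  then show ?thesis using assms unfolding mball_def by auto
qed

lemma sq_dist_diff_le:
  assumes "i < n" "j < n" "l < n"
  shows "(d i l)^2 - (d j l)^2 \<le> 3 * d i j * diam_bound"
proof -
  have x: "0 \<le> d j l" "d j l \<le> diam_bound" "0 \<le> d i j" "d i j \<le> diam_bound"
    using d_nonneg d_le_diam_bound assms by auto
  have "(d i l)^2 \<le> (d i j + d j l)^2"
    using d_triangle[OF assms] d_nonneg assms by (intro power_mono) auto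
  also have "\<dots> = (d j l)^2 + d i j * (d i j + 2 * d j l)"
    by (simp add: power2_eq_square algebra_simps)
  also have "\<dots> \<le> (d j l)^2 + 3 * d i j * diam_bound"
    using x mult_left_mono[of "d i j + 2 * d j l" "3 * diam_bound" "d i j"] by simp
  finally show ?thesis by simp
qed

lemma diam_bound_sq: "diam_bound^2 = C powr (2/e) * n powr (2/e)"
  unfolding diam_bound_eq using C_pos
  by (cases "n = 0") (simp_all add: power_mult_distrib powr_power)

definition band :: "nat \<Rightarrow> nat \<Rightarrow> real \<Rightarrow> nat set" where
  "band a b t = {j\<in>{..<n}. \<bar>d b j - d a j\<bar> \<le> t}"

lemma band_mono: "t \<le> t' \<Longrightarrow> band a b t \<subseteq> band a b t'"
  unfolding band_def by auto

lemma band_subset: "band a b t \<subseteq> {..<n}"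
  unfolding band_def by auto

lemma finite_band: "finite (band a b t)"
  using band_subset by (rule finite_subset) simp

lemma card_mball_ge:
  assumes "i < n" "0 < r" "mball {..<n} d r i \<noteq> {..<n}"
  shows "r powr e / C \<le> card (mball {..<n} d r i)"
proof -
  have "mball {..<n} d r i \<subset> {..<n}" using assms(3) unfolding mball_def by auto
  then have "card (mball {..<n} d r i) < n" using psubset_card_mono[of "{..<n}"] by simp
  then show ?thesis using ball_lower[OF assms(1,2)] by linarith
qed

lemma ball_outside_band:
  assumes ab: "a < n" "b < n" and x: "x \<in> band a b t" and t: "1 \<le> t"
    and y: "y < n" "7*t + 4 \<le> d b y - d a y" "d x y + (2*t + 1) \<le> Q"
    and z: "z \<in> mball {..<n} d (2*t + 1) y"
  shows "z \<in> band a b (t + 2*Q) - band a b t" "d x z \<le> Q"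
proof -
  have xn: "x < n" and band_x: "\<bar>d b x - d a x\<bar> \<le> t" using x unfolding band_def by auto
  have zn: "z < n" and yz: "d y z \<le> 2*t + 1" using z unfolding mball_def by auto
  have "d b y \<le> d b z + d z y" "d a z \<le> d a y + d y z" "d z y = d y z"
    using d_triangle[OF ab(2) zn y(1)] d_triangle[OF ab(1) y(1) zn] d_sym[OF zn y(1)] by auto
  then have lower: "3*t + 2 \<le> d b z - d a z" using y(2) yz by linarith
  show xz: "d x z \<le> Q" using d_triangle[OF xn y(1) zn] y(3) yz by linarith
  have "d b z \<le> d b x + d x z" "d a x \<le> d a z + d z x" "d z x = d x z"
    using d_triangle[OF ab(2) xn zn] d_triangle[OF ab(1) zn xn] d_sym[OF zn xn] by auto
  then have "d b z - d a z \<le> t + 2*Q" using band_x xz by linarith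
  with lower zn t show "z \<in> band a b (t + 2*Q) - band a b t" unfolding band_def by auto
qed

text \<open>Each point \<open>z\<close> of the union of the balls lies in at most \<open>max (C * Q powr e) 1\<close>
  of them, since their owners lie in the \<open>Q\<close>-ball around \<open>z\<close>.\<close>
lemma card_grows_by_disjoint_balls:
  assumes S: "S \<subseteq> T" and T: "T \<subseteq> {..<n}" and r: "0 < r" and Q: "0 < Q"
    and Y: "\<And>x. x \<in> S \<Longrightarrow> Y x < n"
    and ball_T: "\<And>x. x \<in> S \<Longrightarrow> mball {..<n} d r (Y x) \<subseteq> T - S"
    and ball_Q: "\<And>x z. x \<in> S \<Longrightarrow> z \<in> mball {..<n} d r (Y x) \<Longrightarrow> d x z \<le> Q"
  shows "card S * (1 + (r powr e / C) / max (C * Q powr e) 1) \<le> card T"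
proof (cases "S = {}")
  case True
  then show ?thesis by simp
next
  case False
  define H where "H x = mball {..<n} d r (Y x)" for x
  define U where "U = (\<Union>x\<in>S. H x)"
  define M where "M = max (C * Q powr e) 1"
  have Sn: "S \<subseteq> {..<n}" using S T by blast
  have finT: "finite T" using T finite_subset by blast
  then have finS: "finite S" using S finite_subset by blast
  have U: "U \<subseteq> T - S" using ball_T unfolding U_def H_def by blast
  then have finU: "finite U" using finT finite_subset by blast
  have H_lower: "r powr e / C \<le> card (H x)" if "x \<in> S" for x
    using card_mball_ge[OF Y[OF that] r] ball_T[OF that] False Sn unfolding H_def by blast
  have "card S * (r powr e / C) \<le> (\<Sum>x\<in>S. real (card (H x)))"
    using H_lower by (intro sum_bounded_below) auto
  also have "\<dots> \<le> card U * M"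
  proof (rule double_counting_le[OF finS finU])
    show "H x \<subseteq> U" if "x \<in> S" for x using that unfolding U_def by blast
    fix z assume "z \<in> U"
    then have z: "z < n" using U T by blast
    have "{x\<in>S. z \<in> H x} \<subseteq> mball {..<n} d Q z"
      using ball_Q Sn d_sym z unfolding H_def mball_def by fastforce
    then have "card {x\<in>S. z \<in> H x} \<le> card (mball {..<n} d Q z)"
      by (intro card_mono) (simp add: mball_def)
    then show "real (card {x\<in>S. z \<in> H x}) \<le> M"
      using ball_upper[OF z Q] unfolding M_def by linarith
  qed
  finally have "card S * (r powr e / C) \<le> card U * M" .
  moreover have "0 < M" unfolding M_def by simp
  ultimately have "card S * ((r powr e / C) / M) \<le> card U"
    using C_pos by (simp add: field_simps)
  moreover have "card S + card U = card (S \<union> U)"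
    using U finS finU by (intro card_Un_disjoint[symmetric]) auto
  moreover have "card (S \<union> U) \<le> card T" using S U finT by (intro card_mono) auto
  ultimately show ?thesis unfolding M_def by (simp add: algebra_simps)
qed

end

locale kmedoids_ahlfors = ahlfors_space d n C e
  for d :: "nat \<Rightarrow> nat \<Rightarrow> real" and n :: nat and C e :: real +
  fixes k :: nat and ms :: "nat list" and Cl :: "nat \<Rightarrow> nat set"
  assumes k_ge_2: "2 \<le> k"
    and length_ms: "length ms = k" and distinct_ms: "distinct ms" and set_ms: "set ms \<subseteq> {..<n}"
    and nearest: "nearest_assignment d {..<n} ms Cl"
    and swap_optimal: "\<And>g p. g < k \<Longrightarrow> p < n \<Longrightarrow> p \<notin> set ms \<Longrightarrow>
      (\<Sum>j<n. point_cost d ms j) \<le> (\<Sum>j<n. point_cost d (ms[g:=p]) j)"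
begin

lemma card_set_ms: "card (set ms) = k"
  using distinct_ms length_ms by (simp add: distinct_card)

lemma lessThan_k_nonempty: "{..<k} \<noteq> {}"
  using k_ge_2 by (auto simp: lessThan_empty_iff)

lemma k_le_n: "k \<le> n"
  using card_mono[OF _ set_ms] card_set_ms by simp

lemma medoid_less: "g < k \<Longrightarrow> ms ! g < n"
  using set_ms length_ms by (metis lessThan_iff nth_mem subsetD)

lemma cluster_subset: "g < k \<Longrightarrow> Cl g \<subseteq> {..<n}"
  using nearest length_ms unfolding nearest_assignment_def by auto

lemma finite_cluster: "g < k \<Longrightarrow> finite (Cl g)"
  using cluster_subset finite_subset by blast

lemma ex1_cluster: "j < n \<Longrightarrow> \<exists>!g. g < k \<and> j \<in> Cl g"
  using nearest length_ms unfolding nearest_assignment_def by auto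

lemma cluster_disjoint: "g < k \<Longrightarrow> h < k \<Longrightarrow> j \<in> Cl g \<Longrightarrow> j \<in> Cl h \<Longrightarrow> g = h"
  using ex1_cluster cluster_subset by blast

lemma nearest_medoid: "g < k \<Longrightarrow> j \<in> Cl g \<Longrightarrow> h < k \<Longrightarrow> d (ms ! g) j \<le> d (ms ! h) j"
  using nearest length_ms unfolding nearest_assignment_def by auto

lemma point_cost_cluster: "g < k \<Longrightarrow> j \<in> Cl g \<Longrightarrow> point_cost d ms j = (d (ms ! g) j)^2"
  using point_cost_nearest[OF nearest] length_ms by simp

lemma medoid_in_cluster:
  assumes "g < k"
  shows "ms ! g \<in> Cl g"
proof -
  obtain h where h: "h < k" "ms ! g \<in> Cl h" using ex1_cluster[OF medoid_less[OF assms]] by blast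
  have "d (ms ! h) (ms ! g) \<le> d (ms ! g) (ms ! g)" using nearest_medoid[OF h assms] .
  then have "ms ! h = ms ! g"
    using d_self d_nonneg d_eq_0_imp_eq medoid_less assms h(1) by (metis order_antisym)
  then have "h = g" using distinct_ms length_ms assms h(1) by (simp add: nth_eq_iff_index_eq)
  with h show ?thesis by simp
qed

lemma exists_large_cluster: "\<exists>h<k. real n \<le> k * card (Cl h)"
proof -
  obtain h where h: "h \<in> {..<k}" "Max ((\<lambda>g. card (Cl g)) ` {..<k}) = card (Cl h)"
    using obtains_MAX[OF finite_lessThan lessThan_k_nonempty] .
  have "(\<Union>g<k. Cl g) = {..<n}" using ex1_cluster cluster_subset by blast
  then have "n = card (\<Union>g<k. Cl g)" by simp
  also have "\<dots> \<le> (\<Sum>g<k. card (Cl g))" by (rule card_UN_le) simp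
  also have "\<dots> \<le> (\<Sum>g<k. card (Cl h))" using h(2)[symmetric] by (intro sum_mono) simp
  finally show ?thesis using h(1) by (intro exI[of _ h]) (simp flip: of_nat_mult)
qed

end

definition ball_fraction :: "real \<Rightarrow> real \<Rightarrow> real \<Rightarrow> real" where
  "ball_fraction C e \<beta> = min 1 (\<beta> / (2 powr (e+1) * C^2))"

definition swap_gain :: "real \<Rightarrow> real \<Rightarrow> real \<Rightarrow> real" where
  "swap_gain C e \<beta> = 3/16 * \<beta> * ball_fraction C e \<beta> * (\<beta>/(2*C)) powr (2/e)"

lemma ball_fraction_pos: "0 < \<beta> \<Longrightarrow> 0 < C \<Longrightarrow> 0 < ball_fraction C e \<beta>"
  unfolding ball_fraction_def by simp

lemma swap_gain_pos: "0 < \<beta> \<Longrightarrow> 0 < C \<Longrightarrow> 0 < swap_gain C e \<beta>"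
  unfolding swap_gain_def using ball_fraction_pos by simp

context kmedoids_ahlfors
begin

lemma card_cluster_le_far_points:
  assumes "h < k" "0 < \<rho>"
  shows "card (Cl h) \<le> card {j\<in>Cl h. \<rho> < d (ms!h) j} + max (C * \<rho> powr e) 1"
proof -
  have "Cl h \<subseteq> {j\<in>Cl h. \<rho> < d (ms!h) j} \<union> mball {..<n} d \<rho> (ms!h)"
    using cluster_subset[OF assms(1)] unfolding mball_def by auto
  then have "card (Cl h) \<le> card {j\<in>Cl h. \<rho> < d (ms!h) j} + card (mball {..<n} d \<rho> (ms!h))"
    using finite_cluster[OF assms(1)]
    by (intro order_trans[OF card_mono card_Un_le]) (auto simp: mball_def)
  then show ?thesis using ball_upper[OF medoid_less[OF assms(1)] assms(2)] by linarith
qed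

text \<open>Averaging over the non-medoids: each ball of radius \<open>t\<close> contains at least
  \<open>N - k \<ge> N / 2\<close> of them.\<close>
lemma exists_non_medoid_near_many:
  fixes N :: real
  assumes F: "F \<subseteq> {..<n}" and balls: "\<And>j. j < n \<Longrightarrow> N \<le> card (mball {..<n} d t j)"
    and N: "2 * k \<le> N"
  obtains p where "p < n" "p \<notin> set ms" "card F * N \<le> 2 * n * card {j\<in>F. d p j \<le> t}"
proof -
  define P where "P = {..<n} - set ms"
  define near where "near p = real (card {j\<in>F. d p j \<le> t})" for p
  have "N \<le> n"
    using balls[of 0] k_le_n k_ge_2 card_mono[of "{..<n}" "mball {..<n} d t 0"]
    by (force simp: mball_def)
  have card_P: "card P = n - k"
    unfolding P_def using card_set_ms by (simp add: card_Diff_subset set_ms)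
  then have "card P > 0" using N k_ge_2 \<open>N \<le> n\<close> by simp
  then have P: "finite P" "P \<noteq> {}" using card_gt_0_iff by blast+
  then obtain p where p: "p \<in> P" "Max (near ` P) = near p" by (rule obtains_MAX)
  have "card F * (N / 2) \<le> (\<Sum>j\<in>F. real (card {q\<in>P. d q j \<le> t}))"
  proof (rule sum_bounded_below)
    fix j assume "j \<in> F"
    then have j: "j < n" using F by auto
    have "mball {..<n} d t j \<subseteq> {q\<in>P. d q j \<le> t} \<union> set ms"
      unfolding mball_def P_def using d_sym j by auto
    then have "card (mball {..<n} d t j) \<le> card {q\<in>P. d q j \<le> t} + card (set ms)"
      using P(1) by (intro order_trans[OF card_mono card_Un_le]) auto
    then show "N / 2 \<le> card {q\<in>P. d q j \<le> t}"
      using balls[OF j] N card_set_ms by linarith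
  qed
  also have "\<dots> = (\<Sum>j\<in>F. \<Sum>q\<in>P. of_bool (d q j \<le> t))"
    using P(1) by (simp add: Int_def)
  also have "\<dots> = (\<Sum>q\<in>P. near q)"
    unfolding near_def using finite_subset[OF F] by (subst sum.swap) (simp add: Int_def)
  also have "\<dots> \<le> card P * near p"
    using P(1) p(2) by (intro sum_bounded_above) (metis Max_ge finite_imageI imageI)
  also have "\<dots> \<le> n * near p"
    unfolding near_def card_P by (intro mult_right_mono) auto
  finally show thesis using p(1) that unfolding P_def near_def by auto
qed

lemma point_cost_update_le:
  assumes "p < n" "j < n" "q < k"
  shows "point_cost d (ms[g:=p]) j \<le> (d (if q = g then p else ms ! q) j)^2"
proof -
  have nth: "ms[g:=p] ! q' = (if q' = g then p else ms ! q')" if "q' < k" for q'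
    using that length_ms by (simp add: nth_list_update)
  have "0 \<le> d (ms[g:=p] ! q') j" if "q' < length (ms[g:=p])" for q'
    using nth that length_ms assms medoid_less d_nonneg by auto
  from point_cost_le[of q "ms[g:=p]" d j, OF _ this] show ?thesis
    using nth assms length_ms by simp
qed

text \<open>Moving medoid \<open>g\<close> to \<open>p\<close> and sending the points of cluster \<open>g\<close> elsewhere (to \<open>alt j\<close>)
  costs at least as much as it gains on the points \<open>G\<close> of cluster \<open>h\<close>, which then move to \<open>p\<close>.\<close>
lemma swap_gain_le_reassignment_cost:
  assumes gh: "g < k" "h < k" "g \<noteq> h" and p: "p < n" "p \<notin> set ms" and G: "G \<subseteq> Cl h"
    and alt: "\<And>j. j \<in> Cl g \<Longrightarrow> alt j < k \<and> alt j \<noteq> g"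
  shows "(\<Sum>j\<in>G. (d (ms!h) j)^2 - (d p j)^2)
      \<le> (\<Sum>j\<in>Cl g. (d (ms ! alt j) j)^2 - (d (ms ! g) j)^2)"
proof -
  define ub where "ub j = (if j \<in> Cl g then (d (ms ! alt j) j)^2
      else if j \<in> G then (d p j)^2 else point_cost d ms j)" for j
  have ub: "point_cost d (ms[g:=p]) j \<le> ub j" if j: "j < n" for j
  proof -
    note le = point_cost_update_le[OF p(1) j, of _ g]
    obtain q where q: "q < k" "j \<in> Cl q" using ex1_cluster[OF j] by blast
    consider "j \<in> Cl g" | "j \<notin> Cl g" "j \<in> G" | "j \<notin> Cl g" "j \<notin> G" by blast
    then show ?thesis
    proof cases
      case 1
      then show ?thesis using le[of "alt j"] alt unfolding ub_def by simp
    next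
      case 2
      then show ?thesis using le[OF gh(1)] unfolding ub_def by simp
    next
      case 3
      then have "q \<noteq> g" using q by auto
      with 3 show ?thesis using le[OF q(1)] point_cost_cluster[OF q] unfolding ub_def by simp
    qed
  qed
  have G_outside: "G \<subseteq> {..<n} - Cl g"
    using G cluster_subset[OF gh(2)] cluster_disjoint gh by blast
  have "(\<Sum>j<n. point_cost d ms j) \<le> (\<Sum>j<n. point_cost d (ms[g:=p]) j)"
    using swap_optimal[OF gh(1) p] .
  also have "\<dots> \<le> (\<Sum>j<n. ub j)" by (rule sum_mono) (use ub in auto)
  finally have "0 \<le> (\<Sum>j<n. ub j - point_cost d ms j)" by (simp add: sum_subtractf)
  also have "\<dots> = (\<Sum>j\<in>{..<n} - Cl g. ub j - point_cost d ms j)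
      + (\<Sum>j\<in>Cl g. ub j - point_cost d ms j)"
    using cluster_subset[OF gh(1)] by (intro sum.subset_diff) auto
  also have "(\<Sum>j\<in>{..<n} - Cl g. ub j - point_cost d ms j) = (\<Sum>j\<in>G. (d p j)^2 - (d (ms!h) j)^2)"
    using G_outside point_cost_cluster[OF gh(2)] G unfolding ub_def
    by (intro sum.mono_neutral_cong_right) auto
  also have "(\<Sum>j\<in>Cl g. ub j - point_cost d ms j)
      = (\<Sum>j\<in>Cl g. (d (ms ! alt j) j)^2 - (d (ms ! g) j)^2)"
    using point_cost_cluster[OF gh(1)] unfolding ub_def by (intro sum.cong) auto
  finally show ?thesis by (simp add: sum_subtractf)
qed

lemma exists_swap_target:
  fixes \<beta> :: real
  assumes h: "h < k" and \<beta>: "0 < \<beta>" and big: "\<beta> * n \<le> card (Cl h)"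
    and n1: "1 \<le> \<beta> * n / 2" and n2: "2 * k \<le> n * ball_fraction C e \<beta>"
  defines "\<rho> \<equiv> (\<beta> * n / (2*C)) powr (1/e)"
  obtains p G where "p < n" "p \<notin> set ms" "G \<subseteq> Cl h" "\<beta> * ball_fraction C e \<beta> * n / 4 \<le> card G"
    "\<And>j. j \<in> G \<Longrightarrow> \<rho> < d (ms!h) j \<and> d p j \<le> \<rho>/2"
proof -
  define t where "t = \<rho>/2"
  have npos: "0 < n" using n1 \<beta> by (cases n) auto
  have pos: "0 < \<beta>*n/(2*C)" using \<beta> npos C_pos by simp
  then have \<rho>pos: "0 < \<rho>" unfolding \<rho>_def powr_gt_zero by linarith
  have "\<rho> powr e = (\<beta>*n/(2*C)) powr (1/e * e)" unfolding \<rho>_def by (rule powr_powr)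
  then have \<rho>e: "\<rho> powr e = \<beta>*n/(2*C)" using pos e_ge_1 \<beta> C_pos by simp
  define F where "F = {j\<in>Cl h. \<rho> < d (ms!h) j}"
  have F: "F \<subseteq> {..<n}" using cluster_subset[OF h] unfolding F_def by auto
  have "card (Cl h) \<le> card F + \<beta>*n/2"
    using card_cluster_le_far_points[OF h \<rho>pos] \<rho>e n1 C_pos unfolding F_def by simp
  then have F_card: "\<beta>*n/2 \<le> card F" using big by linarith
  have "t powr e / C = n * (\<beta> / (2 powr (e+1) * C^2))"
    unfolding t_def using \<rho>pos \<rho>e C_pos
    by (simp add: powr_divide powr_add field_simps power2_eq_square)
  then have ball_min: "min (real n) (t powr e / C) = n * ball_fraction C e \<beta>"
    unfolding ball_fraction_def by (simp add: min_mult_distrib_left)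
  have balls: "n * ball_fraction C e \<beta> \<le> card (mball {..<n} d t j)" if "j < n" for j
    using ball_lower[OF that, of t] ball_min \<rho>pos unfolding t_def by simp
  obtain p where p: "p < n" "p \<notin> set ms"
    and near: "card F * (n * ball_fraction C e \<beta>) \<le> 2 * n * card {j\<in>F. d p j \<le> t}"
    using exists_non_medoid_near_many[OF F balls n2] by blast
  have "\<beta>*n/2 * (n * ball_fraction C e \<beta>) \<le> card F * (n * ball_fraction C e \<beta>)"
    using F_card ball_fraction_pos[OF \<beta> C_pos, of e] by (intro mult_right_mono) auto
  then have "\<beta> * ball_fraction C e \<beta> * n / 4 \<le> card {j\<in>F. d p j \<le> t}"
    using near npos by (simp add: field_simps)
  with p show thesis by (intro that[of p "{j\<in>F. d p j \<le> t}"]) (auto simp: F_def t_def)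
qed

lemma reassignment_cost_lower_bound:
  fixes \<beta> :: real
  assumes gh: "g < k" "h < k" "g \<noteq> h" and \<beta>: "0 < \<beta>" and big: "\<beta> * n \<le> card (Cl h)"
    and alt: "\<And>j. j \<in> Cl g \<Longrightarrow> alt j < k \<and> alt j \<noteq> g"
    and n1: "1 \<le> \<beta> * n / 2" and n2: "2 * k \<le> n * ball_fraction C e \<beta>"
  shows "swap_gain C e \<beta> * n * n powr (2/e)
      \<le> (\<Sum>j\<in>Cl g. (d (ms ! alt j) j)^2 - (d (ms ! g) j)^2)"
proof -
  define \<rho> where "\<rho> = (\<beta> * n / (2*C)) powr (1/e)"
  obtain p G where p: "p < n" "p \<notin> set ms" and G: "G \<subseteq> Cl h"
    and G_card: "\<beta> * ball_fraction C e \<beta> * n / 4 \<le> card G"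
    and G_dist: "\<And>j. j \<in> G \<Longrightarrow> \<rho> < d (ms!h) j \<and> d p j \<le> \<rho>/2"
    using exists_swap_target[OF gh(2) \<beta> big n1 n2] unfolding \<rho>_def by blast
  have npos: "0 < n" using n1 \<beta> by (cases n) auto
  have "0 \<le> \<rho>" unfolding \<rho>_def by simp
  have "\<rho>^2 = (\<beta>*n/(2*C)) powr (2/e)"
    unfolding \<rho>_def using \<beta> npos C_pos by (simp add: powr_power)
  also have "\<dots> = (\<beta>/(2*C)) powr (2/e) * n powr (2/e)"
    using \<beta> C_pos by (subst powr_mult[symmetric]) auto
  finally have \<rho>sq: "\<rho>^2 = (\<beta>/(2*C)) powr (2/e) * n powr (2/e)" .
  have "card G * (3/4 * \<rho>^2) = (\<Sum>j\<in>G. \<rho>^2 - (\<rho>/2)^2)" by (simp add: power_divide)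
  also have "\<dots> \<le> (\<Sum>j\<in>G. (d (ms!h) j)^2 - (d p j)^2)"
  proof (rule sum_mono)
    fix j assume "j \<in> G"
    then have "d p j \<le> \<rho>/2" "\<rho> < d (ms!h) j" "0 \<le> d p j"
      using G_dist G cluster_subset[OF gh(2)] d_nonneg[OF p(1)] by auto
    then show "\<rho>^2 - (\<rho>/2)^2 \<le> (d (ms!h) j)^2 - (d p j)^2"
      using \<open>0 \<le> \<rho>\<close> by (smt (verit) power_mono)
  qed
  also have "\<dots> \<le> (\<Sum>j\<in>Cl g. (d (ms ! alt j) j)^2 - (d (ms ! g) j)^2)"
    by (rule swap_gain_le_reassignment_cost[OF gh p G alt])
  finally have "card G * (3/4 * \<rho>^2) \<le> \<dots>" .
  moreover have "\<beta> * ball_fraction C e \<beta> * n / 4 * (3/4 * \<rho>^2) \<le> card G * (3/4 * \<rho>^2)"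
    using G_card by (intro mult_right_mono) auto
  ultimately show ?thesis unfolding swap_gain_def \<rho>sq by (simp add: algebra_simps)
qed

end

definition cluster_fraction :: "real \<Rightarrow> real \<Rightarrow> nat \<Rightarrow> real" where
  "cluster_fraction C e k = min (1/k) (swap_gain C e (1/k) / C powr (2/e))"

definition separation_const :: "real \<Rightarrow> real \<Rightarrow> nat \<Rightarrow> real" where
  "separation_const C e k = swap_gain C e (cluster_fraction C e k) / (3 * C powr (1/e))"

lemma cluster_fraction_pos: "0 < C \<Longrightarrow> 0 < k \<Longrightarrow> 0 < cluster_fraction C e k"
  unfolding cluster_fraction_def using swap_gain_pos[of "1/k" C e] by simp

lemma separation_const_pos: "0 < C \<Longrightarrow> 0 < k \<Longrightarrow> 0 < separation_const C e k"
  unfolding separation_const_def using swap_gain_pos cluster_fraction_pos by simp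

context kmedoids_ahlfors
begin

lemma cluster_card_lower_bound:
  assumes n: "2*k \<le> n * ball_fraction C e (1/k)" and g: "g < k"
  shows "cluster_fraction C e k * n \<le> card (Cl g)"
proof -
  have "n * ball_fraction C e (1/k) \<le> n"
    unfolding ball_fraction_def by (simp add: mult_left_le)
  then have n_ge: "2*k \<le> n" using n by linarith
  then have npos: "0 < n" using k_ge_2 by simp
  obtain h where h: "h < k" "real n \<le> k * card (Cl h)" using exists_large_cluster by blast
  then have large: "1/k * n \<le> card (Cl h)" using k_ge_2 by (simp add: field_simps)
  show ?thesis
  proof (cases "h = g")
    case True
    have "cluster_fraction C e k * n \<le> 1/k * n"
      unfolding cluster_fraction_def by (intro mult_right_mono) auto
    then show ?thesis using large[unfolded True] by linarith
  next
    case False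
    have "swap_gain C e (1/k) * n * n powr (2/e)
        \<le> (\<Sum>j\<in>Cl g. (d (ms ! h) j)^2 - (d (ms ! g) j)^2)"
      using reassignment_cost_lower_bound[of g h "1/k" "\<lambda>_. h", OF g h(1) _ _ large] False h n n_ge k_ge_2
      by (simp add: field_simps)
    also have "\<dots> \<le> (\<Sum>j\<in>Cl g. diam_bound^2)"
    proof (rule sum_mono)
      fix j assume "j \<in> Cl g"
      then have j: "j < n" using cluster_subset[OF g] by auto
      have "(d (ms ! h) j)^2 \<le> diam_bound^2"
        using d_nonneg d_le_diam_bound medoid_less h(1) j by (intro power_mono) auto
      then show "(d (ms ! h) j)^2 - (d (ms ! g) j)^2 \<le> diam_bound^2"
        using zero_le_power2[of "d (ms ! g) j"] by linarith
    qed
    also have "\<dots> = card (Cl g) * C powr (2/e) * n powr (2/e)" by (simp add: diam_bound_sq)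
    finally have "swap_gain C e (1/k) * n \<le> card (Cl g) * C powr (2/e)"
      using npos by (simp add: mult.assoc mult_le_cancel_right)
    then have "swap_gain C e (1/k) / C powr (2/e) * n \<le> card (Cl g)"
      using C_pos by (simp add: field_simps)
    moreover have "cluster_fraction C e k * n \<le> swap_gain C e (1/k) / C powr (2/e) * n"
      unfolding cluster_fraction_def by (intro mult_right_mono) auto
    ultimately show ?thesis by linarith
  qed
qed

lemma medoid_separation:
  assumes n1: "2*k \<le> n * ball_fraction C e (1/k)"
    and n2: "1 \<le> cluster_fraction C e k * n / 2"
    and n3: "2 * k \<le> n * ball_fraction C e (cluster_fraction C e k)"
    and gh: "g < k" "h < k" "g \<noteq> h"
  shows "separation_const C e k * n powr (1/e) \<le> d (ms ! g) (ms ! h)"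
proof -
  define D where "D = d (ms ! g) (ms ! h)"
  have npos: "0 < n" using k_le_n k_ge_2 by simp
  have R2: "n powr (2/e) = n powr (1/e) * n powr (1/e)" by (simp flip: powr_add)
  have D: "0 \<le> D" "D \<le> diam_bound" unfolding D_def using d_nonneg d_le_diam_bound medoid_less gh by auto
  have "swap_gain C e (cluster_fraction C e k) * n * n powr (2/e)
      \<le> (\<Sum>j\<in>Cl g. (d (ms ! h) j)^2 - (d (ms ! g) j)^2)"
    using reassignment_cost_lower_bound[of g h _ "\<lambda>_. h", OF gh _ cluster_card_lower_bound[OF n1 gh(2)]]
      gh n2 n3 cluster_fraction_pos[OF C_pos] k_ge_2
    by simp
  also have "\<dots> \<le> (\<Sum>j\<in>Cl g. 3 * D * diam_bound)"
    using sq_dist_diff_le[OF medoid_less[OF gh(2)] medoid_less[OF gh(1)]] cluster_subset[OF gh(1)]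
      d_sym[OF medoid_less[OF gh(1)] medoid_less[OF gh(2)]]
    unfolding D_def by (intro sum_mono) auto
  also have "\<dots> \<le> n * (3 * D * diam_bound)"
    using card_mono[OF _ cluster_subset[OF gh(1)]] D by (simp add: mult_right_mono)
  finally have "swap_gain C e (cluster_fraction C e k) * n powr (1/e) * (n * n powr (1/e))
      \<le> 3 * D * C powr (1/e) * (n * n powr (1/e))"
    unfolding diam_bound_eq R2 by (simp add: algebra_simps)
  then have "swap_gain C e (cluster_fraction C e k) * n powr (1/e) \<le> 3 * D * C powr (1/e)"
    using npos by (simp add: mult_le_cancel_right)
  then show ?thesis unfolding separation_const_def D_def[symmetric] using C_pos by (simp add: field_simps)
qed

end

lemma near_segment_point_close:
  fixes x a y :: "'a::real_inner"
  assumes L: "norm (a - x) = L" "0 < L" and s: "0 \<le> s" "s \<le> L" and ep: "0 \<le> ep"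
    and y1: "norm (y - x) \<le> s + ep" and y2: "norm (y - a) \<le> L - s + ep"
  shows "norm (y - (x + (s/L) *\<^sub>R (a - x))) \<le> sqrt (4 * s * ep + ep^2)"
proof -
  define v where "v = y - x"
  define A where "A = a - x"
  have AA: "inner A A = L^2" using L unfolding A_def by (simp flip: power2_norm_eq_inner)
  have "(norm (y - a))^2 = inner v v - 2 * inner v A + L^2"
    using AA unfolding v_def A_def power2_norm_eq_inner
    by (simp add: inner_diff_left inner_diff_right inner_commute)
  moreover have "(norm (y - a))^2 \<le> (L - s + ep)^2" using y2 by (intro power_mono) auto
  ultimately have vA: "inner v v + L^2 - (L - s + ep)^2 \<le> 2 * inner v A" by simp
  have vv: "inner v v \<le> (s + ep)^2"
    using y1 s ep unfolding v_def power2_norm_eq_inner[symmetric] by (intro power_mono) auto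
  define w where "w = L *\<^sub>R v - s *\<^sub>R A"
  have "inner w w = L^2 * inner v v - 2 * L * s * inner v A + s^2 * L^2"
    unfolding w_def using AA
    by (simp add: inner_diff_left inner_diff_right inner_commute power2_eq_square algebra_simps)
  also have "\<dots> \<le> L^2 * inner v v - L * s * (inner v v + L^2 - (L - s + ep)^2) + s^2 * L^2"
    using mult_left_mono[OF vA, of "L * s"] L s by simp
  also have "\<dots> = L * (inner v v * (L - s)) + L * (s * (L - s + ep)^2 - L^2 * s + s^2 * L)"
    by (simp add: algebra_simps power2_eq_square)
  also have "\<dots> \<le> L * ((s + ep)^2 * (L - s)) + L * (s * (L - s + ep)^2 - L^2 * s + s^2 * L)"
    using vv L s by (intro add_right_mono mult_left_mono mult_right_mono) auto
  also have "\<dots> = L * (L * (4 * s * ep + ep^2) - 4 * s^2 * ep)"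
    by (simp add: algebra_simps power2_eq_square)
  also have "\<dots> \<le> L^2 * (4 * s * ep + ep^2)"
    using L s ep by (simp add: power2_eq_square algebra_simps)
  finally have w: "inner w w \<le> L^2 * (4 * s * ep + ep^2)" .
  have yz: "y - (x + (s/L) *\<^sub>R (a - x)) = (1/L) *\<^sub>R w"
    unfolding w_def v_def A_def using L by (simp add: algebra_simps)
  have "(norm (y - (x + (s/L) *\<^sub>R (a - x))))^2 = inner w w / L^2"
    unfolding yz power2_norm_eq_inner by (simp add: power2_eq_square)
  also have "\<dots> \<le> 4 * s * ep + ep^2" using w L by (simp add: field_simps)
  finally show ?thesis by (rule real_le_rsqrt)
qed

lemma segment_point_dist_ge:
  fixes x a b :: "'a::real_inner"
  assumes L: "norm (a - x) = L" "0 < L" and P: "norm (b - x) = P" "0 < P" and s: "0 \<le> s"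
  shows "P - s * (L^2 + P^2 - (norm (a - b))^2) / (2 * L * P)
      \<le> norm (x + (s/L) *\<^sub>R (a - x) - b)"
proof -
  define A where "A = a - x"
  define B where "B = b - x"
  define q where "q = inner A B"
  have AA: "inner A A = L^2" using L unfolding A_def by (simp flip: power2_norm_eq_inner)
  have BB: "inner B B = P^2" using P unfolding B_def by (simp flip: power2_norm_eq_inner)
  have "x + (s/L) *\<^sub>R (a - x) - b = (s/L) *\<^sub>R A - B" unfolding A_def B_def by simp
  then have "(norm (x + (s/L) *\<^sub>R (a - x) - b))^2 = inner ((s/L) *\<^sub>R A - B) ((s/L) *\<^sub>R A - B)"
    by (simp only: power2_norm_eq_inner)
  also have "\<dots> = inner B B - 2 * (s/L) * q + (s/L)^2 * inner A A"
    unfolding q_def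
    by (simp add: inner_diff_left inner_diff_right inner_commute power2_eq_square algebra_simps)
  also have "\<dots> = P^2 - 2 * (s/L) * q + s^2"
    using AA BB L by (simp add: power2_eq_square)
  finally have zb: "(norm (x + (s/L) *\<^sub>R (a - x) - b))^2 = P^2 - 2 * (s/L) * q + s^2" .
  have "\<bar>q\<bar> \<le> L * P"
    unfolding q_def using Cauchy_Schwarz_ineq2[of A B] L P unfolding A_def B_def by simp
  then have "q^2 \<le> (L*P)^2" using power_mono[of "\<bar>q\<bar>" "L*P" 2] by simp
  then have "s^2 * q^2 / (L*P)^2 \<le> s^2" using L P by (simp add: divide_le_eq mult_left_mono)
  moreover have "(P - s * q / (L * P))^2 = P^2 - 2 * (s/L) * q + s^2 * q^2 / (L*P)^2"
    using L(2) P(2) by (simp add: power2_eq_square field_simps)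
  ultimately have "(P - s * q / (L * P))^2 \<le> (norm (x + (s/L) *\<^sub>R (a - x) - b))^2"
    unfolding zb by linarith
  then have zb_ge: "P - s * q / (L * P) \<le> norm (x + (s/L) *\<^sub>R (a - x) - b)"
    by (rule power2_le_imp_le) simp
  have "a - b = A - B" unfolding A_def B_def by simp
  then have "(norm (a - b))^2 = inner (A - B) (A - B)" by (simp only: power2_norm_eq_inner)
  also have "\<dots> = L^2 - 2 * q + P^2"
    using AA BB unfolding q_def by (simp add: inner_diff_left inner_diff_right inner_commute)
  finally have "s * (L^2 + P^2 - (norm (a - b))^2) / (2 * L * P) = s * q / (L * P)" by simp
  with zb_ge show ?thesis by linarith
qed

text \<open>The coefficient of \<open>s\<close> is \<open>1 - cos\<close> of the angle between \<open>a\<close> and \<open>b\<close> at \<open>x\<close>: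
  moving from \<open>x\<close> towards \<open>a\<close> increases the distance to \<open>b\<close> relative to that to \<open>a\<close>
  at this rate, up to the error \<open>ep\<close>.\<close>
lemma dist_diff_near_segment_ge:
  fixes x a b y :: "'a::real_inner"
  assumes L: "norm (a - x) = L" "0 < L" and P: "norm (b - x) = P" "0 < P"
    and s: "0 \<le> s" "s \<le> L" and ep: "0 \<le> ep"
    and y1: "norm (y - x) \<le> s + ep" and y2: "norm (y - a) \<le> L - s + ep"
  shows "P - L + s * ((norm (a - b))^2 - (L - P)^2) / (2 * L * P) - sqrt (4 * s * ep + ep^2) - ep
      \<le> norm (y - b) - norm (y - a)"
proof -
  define z where "z = x + (s/L) *\<^sub>R (a - x)"
  have "norm (z - b) \<le> norm (y - b) + norm (y - z)"
    by (metis norm_diff_triangle_le norm_minus_commute order_refl add.commute)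
  moreover have "norm (y - z) \<le> sqrt (4 * s * ep + ep^2)"
    unfolding z_def by (rule near_segment_point_close[OF L s ep y1 y2])
  moreover have "P - s * (L^2 + P^2 - (norm (a - b))^2) / (2 * L * P) \<le> norm (z - b)"
    unfolding z_def by (rule segment_point_dist_ge[OF L P s(1)])
  moreover have "P - s * (L^2 + P^2 - (norm (a - b))^2) / (2 * L * P)
      = P - L + s * ((norm (a - b))^2 - (L - P)^2) / (2 * L * P) + (L - s)"
    using L P by (simp add: field_simps power2_eq_square)
  ultimately show ?thesis using y2 by linarith
qed

locale coarse_euclidean_space = ahlfors_space d n C e
  for d :: "nat \<Rightarrow> nat \<Rightarrow> real" and n :: nat and C e :: real +
  fixes emb :: "nat \<Rightarrow> 'a::real_inner" and K :: real
  assumes coarse: "coarse_isometry {..<n} d dist K emb"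
    and interpolant: "\<And>i j a. i < n \<Longrightarrow> j < n \<Longrightarrow> 0 \<le> a \<Longrightarrow> a \<le> 1 \<Longrightarrow>
        \<exists>g\<in>{..<n}. \<bar>d i g - a * d i j\<bar> \<le> K \<and> \<bar>d g j - (1 - a) * d i j\<bar> \<le> K"
begin

lemma norm_emb_le: "i < n \<Longrightarrow> j < n \<Longrightarrow> norm (emb i - emb j) \<le> d i j + K"
  using coarse unfolding coarse_isometry_def dist_norm by force

lemma d_le_norm_emb: "i < n \<Longrightarrow> j < n \<Longrightarrow> d i j \<le> norm (emb i - emb j) + K"
  using coarse unfolding coarse_isometry_def dist_norm by force

lemma K_nonneg: "0 < n \<Longrightarrow> 0 \<le> K"
  using d_le_norm_emb[of 0 0] d_self[of 0] by simp

text \<open>In the embedding, the angle at a point \<open>x\<close> of the band between \<open>a\<close> and \<open>b\<close> stays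
  away from 0: the right-hand side is \<open>1 - cos\<close> of that angle.\<close>
lemma embedded_angle_lower_bound:
  assumes ab: "a < n" "b < n" and x: "x < n"
    and band: "\<bar>d b x - d a x\<bar> \<le> d a b / 2 - 2*K" and K: "K < d a b / 4"
  defines "L \<equiv> norm (emb a - emb x)" and "P \<equiv> norm (emb b - emb x)"
  shows "0 < L" "0 < P"
    and "5 * (d a b)^2 / (128 * diam_bound^2) \<le> ((norm (emb a - emb b))^2 - (L - P)^2) / (2 * L * P)"
proof -
  define D where "D = d a b"
  have K0: "0 \<le> K" using K_nonneg x by simp
  have "D \<le> d a x + d b x" unfolding D_def using d_triangle[OF ab(1) x ab(2)] d_sym[OF x ab(2)] by simp
  then have far: "D/4 + K \<le> d a x" "D/4 + K \<le> d b x" using band unfolding D_def by linarith+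
  have L: "d a x - K \<le> L" "L \<le> d a x + K" and P: "d b x - K \<le> P" "P \<le> d b x + K"
    using norm_emb_le d_le_norm_emb ab x unfolding L_def P_def by (smt (verit))+
  show Lpos: "0 < L" and Ppos: "0 < P" using far L P K K0 unfolding D_def by linarith+
  have "3*D/4 \<le> norm (emb a - emb b)" using d_le_norm_emb[OF ab] K unfolding D_def by linarith
  then have "(3*D/4)^2 \<le> (norm (emb a - emb b))^2" using K K0 unfolding D_def by (intro power_mono) auto
  moreover have "\<bar>L - P\<bar> \<le> D/2" using L P band unfolding D_def by linarith
  then have "(L - P)^2 \<le> (D/2)^2" using power_mono[of "\<bar>L - P\<bar>" "D/2" 2] by simp
  ultimately have num: "5 * D^2 / 16 \<le> (norm (emb a - emb b))^2 - (L - P)^2"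
    by (simp add: power2_eq_square)
  have "D \<le> diam_bound" "d a x \<le> diam_bound" "d b x \<le> diam_bound"
    using d_le_diam_bound ab x unfolding D_def by auto
  then have "L \<le> 2 * diam_bound" "P \<le> 2 * diam_bound" using L P K unfolding D_def by linarith+
  then have den: "2 * L * P \<le> 8 * diam_bound^2"
    using mult_mono[of L "2 * diam_bound" P "2 * diam_bound"] Lpos Ppos by (simp add: power2_eq_square)
  have "5 * D^2 / (128 * diam_bound^2) = (5 * D^2 / 16) / (8 * diam_bound^2)" by simp
  also have "\<dots> \<le> ((norm (emb a - emb b))^2 - (L - P)^2) / (8 * diam_bound^2)"
    using num by (intro divide_right_mono) auto
  also have "\<dots> \<le> ((norm (emb a - emb b))^2 - (L - P)^2) / (2 * L * P)"
  proof (rule divide_left_mono[OF den])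
    show "0 \<le> (norm (emb a - emb b))^2 - (L - P)^2" using num zero_le_power2[of D] by linarith
    show "0 < 8 * diam_bound^2 * (2 * L * P)"
      using Lpos Ppos \<open>L \<le> 2 * diam_bound\<close> by simp
  qed
  finally show "5 * (d a b)^2 / (128 * diam_bound^2) \<le> ((norm (emb a - emb b))^2 - (L - P)^2) / (2 * L * P)"
    unfolding D_def .
qed

end

context coarse_euclidean_space
begin

lemma interpolant_at_distance:
  assumes "x < n" "a < n" "0 \<le> s" "s \<le> d x a"
  obtains y where "y < n" "d x y \<le> s + K" "d y a \<le> d x a - s + K"
proof (cases "d x a = 0")
  case True
  then show thesis using that[of x] assms d_self K_nonneg by simp
next
  case False
  define lam where "lam = s / d x a"
  have "0 \<le> lam" "lam \<le> 1" "lam * d x a = s"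
    unfolding lam_def using assms False d_nonneg[OF assms(1,2)] by (auto simp: field_simps)
  then obtain y where "y < n" "\<bar>d x y - lam * d x a\<bar> \<le> K" "\<bar>d y a - (1 - lam) * d x a\<bar> \<le> K"
    using interpolant[OF assms(1,2)] by auto
  then show thesis using that \<open>lam * d x a = s\<close> by (auto simp: algebra_simps)
qed

text \<open>Walking from a band point \<open>x\<close> a distance \<open>s\<close> towards \<open>a\<close> (via an interpolant) increases
  \<open>d b - d a\<close> by about \<open>\<gamma> s\<close>: up to the additive errors the embedding is Euclidean, and the angle
  at \<open>x\<close> is bounded below.\<close>
lemma interpolant_leaves_band:
  assumes ab: "a < n" "b < n" and x: "x < n" and band: "\<bar>d b x - d a x\<bar> \<le> t"
    and t: "t + 2*K \<le> d a b / 2" and s: "1 \<le> s" "s \<le> d a b / 4 - K"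
    and \<gamma>: "\<gamma> \<le> 5 * (d a b)^2 / (128 * diam_bound^2)"
    and Ks: "12*K + 9*K^2 \<le> \<gamma>^2 * s / 16" "28*K \<le> \<gamma> * s"
  obtains y where "y < n" "d x y \<le> s + K" "d b x - d a x + \<gamma> * s / 2 \<le> d b y - d a y"
proof -
  have K0: "0 \<le> K" using K_nonneg x by simp
  define L where "L = norm (emb a - emb x)"
  define P where "P = norm (emb b - emb x)"
  have "\<bar>d b x - d a x\<bar> \<le> d a b / 2 - 2*K" "K < d a b / 4" using band t s by linarith+
  note angle = embedded_angle_lower_bound[OF ab x this, folded L_def P_def]
  have LP: "0 < L" "0 < P" using angle by auto
  have \<gamma>_le: "\<gamma> \<le> ((norm (emb a - emb b))^2 - (L - P)^2) / (2 * L * P)"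
    using angle \<gamma> by linarith
  have "d a b \<le> d a x + d b x" using d_triangle[OF ab(1) x ab(2)] d_sym[OF x ab(2)] by simp
  then have sx: "s + K \<le> d a x" using band t s K0 by linarith
  obtain y where y: "y < n" and dxy: "d x y \<le> s + K" and dya: "d y a \<le> d a x - s + K"
    using interpolant_at_distance[OF x ab(1), of s] sx s K0 d_sym[OF x ab(1)] by auto
  have L_bounds: "d a x - K \<le> L" "L \<le> d a x + K" and P_bounds: "d b x - K \<le> P"
    using norm_emb_le d_le_norm_emb ab x unfolding L_def P_def by (smt (verit))+
  have y1: "norm (emb y - emb x) \<le> s + 3*K"
    using norm_emb_le[OF y x] dxy d_sym[OF x y] K0 by linarith
  have y2: "norm (emb y - emb a) \<le> L - s + 3*K"
    using norm_emb_le[OF y ab(1)] dya L_bounds d_sym[OF y ab(1)] by linarith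
  have "s \<le> L" using sx L_bounds by linarith
  then have near: "P - L + s * ((norm (emb a - emb b))^2 - (L - P)^2) / (2 * L * P)
      - sqrt (4 * s * (3*K) + (3*K)^2) - 3*K \<le> norm (emb y - emb b) - norm (emb y - emb a)"
    using dist_diff_near_segment_ge[OF L_def[symmetric] LP(1) P_def[symmetric] LP(2) _ _ _ y1 y2] s K0
    by simp
  have "sqrt (4 * s * (3*K) + (3*K)^2) \<le> \<gamma> * s / 4"
  proof (rule real_le_lsqrt)
    have "4 * s * (3*K) + (3*K)^2 \<le> (12*K + 9*K^2) * s"
      using mult_left_mono[of 1 s "9*K^2"] s K0 by (simp add: algebra_simps power2_eq_square)
    also have "\<dots> \<le> (\<gamma> * s / 4)^2"
      using mult_right_mono[OF Ks(1), of s] s by (simp add: power2_eq_square)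
    finally show "4 * s * (3*K) + (3*K)^2 \<le> (\<gamma> * s / 4)^2" .
  qed (use Ks(2) K0 in linarith)
  moreover have "s * \<gamma> \<le> s * ((norm (emb a - emb b))^2 - (L - P)^2) / (2 * L * P)"
    using mult_left_mono[OF \<gamma>_le, of s] s by simp
  moreover have "norm (emb y - emb b) - K \<le> d b y"
    using norm_emb_le[OF y ab(2)] d_sym[OF y ab(2)] by simp
  moreover have "d a y \<le> norm (emb y - emb a) + K"
    using d_le_norm_emb[OF ab(1) y] norm_minus_commute[of "emb a" "emb y"] by simp
  ultimately have "d b x - d a x + s * \<gamma> - \<gamma> * s / 4 - 7*K \<le> d b y - d a y"
    using near L_bounds P_bounds by linarith
  with Ks(2) y dxy show thesis using that by (simp add: algebra_simps)
qed

end

context coarse_euclidean_space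
begin

lemma card_band_grows:
  assumes ab: "a < n" "b < n" and t: "1 \<le> t" "t + 2*K \<le> d a b / 2"
    and s: "\<gamma> * s = 8 * (2*t + 1)" "1 \<le> s" "s \<le> d a b / 4 - K"
    and \<gamma>: "\<gamma> \<le> 5 * (d a b)^2 / (128 * diam_bound^2)"
    and Ks: "12*K + 9*K^2 \<le> \<gamma>^2 * s / 16" "28*K \<le> \<gamma> * s"
  shows "card (band a b t) * (1 + ((2*t + 1) powr e / C) / max (C * (s + K + (2*t + 1)) powr e) 1)
      \<le> card (band a b (t + 2 * (s + K + (2*t + 1))))"
proof -
  define r where "r = 2*t + 1"
  define Q where "Q = s + K + r"
  have K0: "0 \<le> K" using K_nonneg ab by simp
  have "\<exists>y<n. d x y \<le> s + K \<and> 7*t + 4 \<le> d b y - d a y" if "x \<in> band a b t" for x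
  proof -
    have x: "x < n" "\<bar>d b x - d a x\<bar> \<le> t" using that unfolding band_def by auto
    obtain y where y: "y < n" "d x y \<le> s + K"
      and gain: "d b x - d a x + \<gamma> * s / 2 \<le> d b y - d a y"
      using interpolant_leaves_band[OF ab x t(2) s(2,3) \<gamma> Ks] .
    have "d b x - d a x + (8*t + 4) \<le> d b y - d a y" using gain s(1) by (simp add: field_simps)
    then have "7*t + 4 \<le> d b y - d a y" using x(2) by linarith
    with y show ?thesis by blast
  qed
  then obtain Y where Y: "\<And>x. x \<in> band a b t \<Longrightarrow>
      Y x < n \<and> d x (Y x) \<le> s + K \<and> 7*t + 4 \<le> d b (Y x) - d a (Y x)"
    by metis
  have ball: "z \<in> band a b (t + 2*Q) - band a b t \<and> d x z \<le> Q"
    if x: "x \<in> band a b t" and z: "z \<in> mball {..<n} d r (Y x)" for x z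
  proof -
    have "Y x < n" "7*t + 4 \<le> d b (Y x) - d a (Y x)" "d x (Y x) + (2*t + 1) \<le> Q"
      using Y[OF x] unfolding Q_def r_def by auto
    from ball_outside_band[OF ab x t(1) this z[unfolded r_def]] show ?thesis by blast
  qed
  have "card (band a b t) * (1 + (r powr e / C) / max (C * Q powr e) 1)
      \<le> card (band a b (t + 2*Q))"
  proof (rule card_grows_by_disjoint_balls)
    show "band a b t \<subseteq> band a b (t + 2*Q)"
      using s(2) K0 t(1) unfolding Q_def r_def by (intro band_mono) auto
    show "0 < r" "0 < Q" using s(2) K0 t(1) unfolding Q_def r_def by auto
  qed (use Y ball band_subset in auto)
  then show ?thesis unfolding Q_def r_def .
qed

end

definition band_angle :: "real \<Rightarrow> real \<Rightarrow> nat \<Rightarrow> real" where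
  "band_angle C e k = 5 * (separation_const C e k)^2 / (128 * C powr (2/e))"

definition band_growth_factor :: "real \<Rightarrow> real \<Rightarrow> real" where
  "band_growth_factor \<gamma> K = 7 + 48/\<gamma> + 6*K"

definition band_growth_rate :: "real \<Rightarrow> real \<Rightarrow> real \<Rightarrow> real \<Rightarrow> real" where
  "band_growth_rate C e \<gamma> K = 1 / (C * (C + 1) * (8/\<gamma> + K + 1) powr e)"

definition band_min_width :: "real \<Rightarrow> real \<Rightarrow> real" where
  "band_min_width \<gamma> K = 1 + \<gamma> + (12*K + 9*K^2)/\<gamma> + 2*K"

text \<open>\<open>R\<close> is the scale of the medoid separation, i.e. \<open>c * R \<le> d (ms ! g) (ms ! h)\<close>.\<close>
definition band_max_width :: "real \<Rightarrow> real \<Rightarrow> real \<Rightarrow> real \<Rightarrow> real" where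
  "band_max_width c \<gamma> K R = min (c * R / 2 - 2*K) ((\<gamma> * (c * R / 4 - K) / 8 - 1) / 2)"

lemma band_angle_pos: "0 < C \<Longrightarrow> 0 < k \<Longrightarrow> 0 < band_angle C e k"
  unfolding band_angle_def using separation_const_pos[of C k e] by simp

lemma band_growth_rate_pos:
  assumes "0 < C" "0 < \<gamma>" "0 \<le> K"
  shows "0 < band_growth_rate C e \<gamma> K"
proof -
  have "0 < 8/\<gamma> + K + 1" using assms by (smt (verit) divide_pos_pos)
  then have "0 < (8/\<gamma> + K + 1) powr e" unfolding powr_gt_zero by linarith
  then show ?thesis unfolding band_growth_rate_def using assms by simp
qed

lemma one_le_band_growth_factor: "0 < \<gamma> \<Longrightarrow> 0 \<le> K \<Longrightarrow> 1 \<le> band_growth_factor \<gamma> K"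
  unfolding band_growth_factor_def by simp

lemma band_min_width_nonneg: "0 < \<gamma> \<Longrightarrow> 0 \<le> K \<Longrightarrow> 0 \<le> band_min_width \<gamma> K"
  unfolding band_min_width_def by simp

lemma band_width_conditions:
  fixes \<gamma> c K R D t :: real
  assumes \<gamma>: "0 < \<gamma>" and K: "0 \<le> K" "4*K \<le> c * R" and D: "c * R \<le> D"
    and t: "band_min_width \<gamma> K \<le> t" "t \<le> band_max_width c \<gamma> K R"
  defines "s \<equiv> 8 * (2*t + 1) / \<gamma>"
  shows "1 \<le> t" "t + 2*K \<le> D / 2" "1 \<le> s" "s \<le> D/4 - K"
    and "12*K + 9*K^2 \<le> \<gamma>^2 * s / 16" "28*K \<le> \<gamma> * s"
proof -
  have "0 \<le> (12*K + 9*K^2) / \<gamma>" using \<gamma> K by simp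
  then have t_ge: "1 \<le> t" "\<gamma> \<le> t" "(12*K + 9*K^2) / \<gamma> \<le> t" "2*K \<le> t"
    using t(1) \<gamma> K unfolding band_min_width_def by linarith+
  have t_le: "t \<le> c * R / 2 - 2*K" "8 * (2*t + 1) \<le> \<gamma> * (c * R / 4 - K)"
    using t(2) unfolding band_max_width_def by (auto simp: field_simps)
  show "1 \<le> t" by (rule t_ge(1))
  show "t + 2*K \<le> D / 2" using t_le(1) D by linarith
  have s: "\<gamma> * s = 8 * (2*t + 1)" unfolding s_def using \<gamma> by simp
  have "16 * t \<le> \<gamma> * s" unfolding s by simp
  then have "\<gamma> * 16 \<le> \<gamma> * s" using t_ge(2) by linarith
  then show "1 \<le> s" using \<gamma> mult_le_cancel_left_pos[of \<gamma> 16 s] by linarith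
  have "\<gamma> * s \<le> \<gamma> * (c * R / 4 - K)" unfolding s using t_le(2) by simp
  then have "s \<le> c * R / 4 - K" using \<gamma> by simp
  then show "s \<le> D/4 - K" using D by linarith
  have "12*K + 9*K^2 \<le> \<gamma> * t" using t_ge(3) \<gamma> by (simp add: divide_le_eq mult.commute)
  also have "\<dots> \<le> \<gamma> * (\<gamma> * s) / 16" unfolding s using \<gamma> t_ge(1) by simp
  finally show "12*K + 9*K^2 \<le> \<gamma>^2 * s / 16" by (simp add: power2_eq_square)
  show "28*K \<le> \<gamma> * s" unfolding s using t_ge(4) K by (simp add: algebra_simps)
qed

lemma band_growth_constants:
  fixes C e \<gamma> K t :: real
  assumes C: "0 < C" and e: "0 \<le> e" and \<gamma>: "0 < \<gamma>" and K: "0 \<le> K" and t: "1 \<le> t"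
  defines "Q \<equiv> 8 * (2*t + 1) / \<gamma> + K + (2*t + 1)"
  shows "band_growth_rate C e \<gamma> K \<le> ((2*t + 1) powr e / C) / max (C * Q powr e) 1"
    and "t + 2 * Q \<le> band_growth_factor \<gamma> K * t"
proof -
  define r where "r = 2*t + 1"
  define \<rho> where "\<rho> = 8/\<gamma> + K + 1"
  have r: "1 \<le> r" "r \<le> 3*t" unfolding r_def using t by auto
  have \<rho>: "1 \<le> \<rho>" unfolding \<rho>_def using \<gamma> K by simp
  have Q_le: "Q \<le> r * \<rho>"
    unfolding Q_def r_def[symmetric] \<rho>_def using mult_left_mono[of 1 r K] r K
    by (simp add: algebra_simps)
  have Q1: "1 \<le> Q" unfolding Q_def using \<gamma> K t by simp
  then have "1 \<le> Q powr e" using e by (rule ge_one_powr_ge_zero)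
  moreover have "0 \<le> C * Q powr e" using C by simp
  ultimately have "max (C * Q powr e) 1 \<le> (C + 1) * Q powr e" by (simp add: algebra_simps)
  also have "\<dots> \<le> (C + 1) * (r powr e * \<rho> powr e)"
    using powr_mono2[OF e _ Q_le] Q1 r \<rho> C by (simp add: powr_mult)
  finally have max_le: "max (C * Q powr e) 1 \<le> (C + 1) * (r powr e * \<rho> powr e)" .
  have "band_growth_rate C e \<gamma> K = (r powr e / C) / ((C + 1) * (r powr e * \<rho> powr e))"
    unfolding band_growth_rate_def \<rho>_def[symmetric] using r C by simp
  also have "\<dots> \<le> (r powr e / C) / max (C * Q powr e) 1"
    using max_le r C by (intro divide_left_mono) auto
  finally show "band_growth_rate C e \<gamma> K \<le> ((2*t + 1) powr e / C) / max (C * Q powr e) 1"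
    unfolding r_def .
  have "t + 2 * Q \<le> t + 2 * (3 * t * \<rho>)"
    using Q_le mult_right_mono[OF r(2), of \<rho>] \<rho> by linarith
  also have "\<dots> = band_growth_factor \<gamma> K * t"
    unfolding band_growth_factor_def \<rho>_def using \<gamma> by (simp add: algebra_simps)
  finally show "t + 2 * Q \<le> band_growth_factor \<gamma> K * t" .
qed

definition large_enough :: "real \<Rightarrow> real \<Rightarrow> nat \<Rightarrow> real \<Rightarrow> nat \<Rightarrow> bool" where
  "large_enough C e k K n \<longleftrightarrow>
     2*k \<le> n * ball_fraction C e (1/k) \<and> 1 \<le> cluster_fraction C e k * n / 2 \<and>
     2*k \<le> n * ball_fraction C e (cluster_fraction C e k) \<and>
     4*K \<le> separation_const C e k * n powr (1/e)"

locale kmedoids_coarse_euclidean =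
  kmedoids_ahlfors d n C e k ms Cl + coarse_euclidean_space d n C e emb K
  for d :: "nat \<Rightarrow> nat \<Rightarrow> real" and n :: nat and C e :: real and k :: nat
    and ms :: "nat list" and Cl :: "nat \<Rightarrow> nat set" and emb :: "nat \<Rightarrow> 'a::real_inner" and K :: real
begin

lemma card_medoid_band_grows:
  assumes large: "large_enough C e k K n" and gh: "g < k" "h < k" "g \<noteq> h"
    and t: "band_min_width (band_angle C e k) K \<le> t"
      "t \<le> band_max_width (separation_const C e k) (band_angle C e k) K (n powr (1/e))"
  shows "card (band (ms!g) (ms!h) t) * (1 + band_growth_rate C e (band_angle C e k) K)
      \<le> card (band (ms!g) (ms!h) (band_growth_factor (band_angle C e k) K * t))"
proof -
  define \<gamma> where "\<gamma> = band_angle C e k"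
  define c where "c = separation_const C e k"
  define R where "R = n powr (1/e)"
  define D where "D = d (ms!g) (ms!h)"
  define s where "s = 8 * (2*t + 1) / \<gamma>"
  have K0: "0 \<le> K" using K_nonneg k_le_n k_ge_2 by simp
  have \<gamma>: "0 < \<gamma>" unfolding \<gamma>_def using band_angle_pos C_pos k_ge_2 by simp
  have sep: "c * R \<le> D"
    using large medoid_separation[OF _ _ _ gh] unfolding large_enough_def c_def R_def D_def by simp
  have K4: "4*K \<le> c * R" using large unfolding large_enough_def c_def R_def by blast
  have "\<gamma> = 5 * (c * R)^2 / (128 * diam_bound^2)"
    unfolding \<gamma>_def band_angle_def c_def R_def diam_bound_sq using k_le_n k_ge_2
    by (simp add: power_mult_distrib powr_power)
  also have "\<dots> \<le> 5 * D^2 / (128 * diam_bound^2)"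
    using sep separation_const_pos[OF C_pos, of k e] k_ge_2 unfolding c_def R_def
    by (intro divide_right_mono mult_left_mono power_mono) auto
  finally have \<gamma>_le: "\<gamma> \<le> 5 * D^2 / (128 * diam_bound^2)" .
  note cond = band_width_conditions[OF \<gamma> K0 K4 sep t[folded \<gamma>_def c_def R_def], folded s_def]
  have "\<gamma> * s = 8 * (2*t + 1)" unfolding s_def using \<gamma> by simp
  note growth = card_band_grows[OF medoid_less[OF gh(1)] medoid_less[OF gh(2)] cond(1,2)[unfolded D_def]
      this cond(3,4)[unfolded D_def] \<gamma>_le[unfolded D_def] cond(5,6)]
  have "0 \<le> e" using e_ge_1 by simp
  note const = band_growth_constants[OF C_pos this \<gamma> K0 cond(1), folded s_def]
  have "card (band (ms!g) (ms!h) t) * (1 + band_growth_rate C e \<gamma> K)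
      \<le> card (band (ms!g) (ms!h) t) * (1 + ((2*t + 1) powr e / C) / max (C * (s + K + (2*t + 1)) powr e) 1)"
    using const(1) by (intro mult_left_mono) auto
  also have "\<dots> \<le> card (band (ms!g) (ms!h) (t + 2 * (s + K + (2*t + 1))))" by (rule growth)
  also have "\<dots> \<le> card (band (ms!g) (ms!h) (band_growth_factor \<gamma> K * t))"
    using const(2) by (simp add: card_mono finite_band band_mono)
  finally show ?thesis unfolding \<gamma>_def .
qed

end

lemma iterated_growth_bound:
  fixes f :: "real \<Rightarrow> real"
  assumes bound: "\<And>t. f t \<le> N" and \<Lambda>: "1 \<le> \<Lambda>" and \<eta>: "0 \<le> \<eta>" and T0: "0 \<le> T0"
    and step: "\<And>t. T0 \<le> t \<Longrightarrow> t \<le> T1 \<Longrightarrow> f t * (1 + \<eta>) \<le> f (\<Lambda> * t)"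
  shows "T0 \<le> t \<Longrightarrow> \<Lambda>^m * t \<le> T1 \<Longrightarrow> f t * (1 + \<eta>)^m \<le> N"
proof (induction m arbitrary: t)
  case 0
  then show ?case using bound by simp
next
  case (Suc m)
  have "0 \<le> t" using Suc.prems(1) T0 by linarith
  then have "1 * t \<le> \<Lambda> * t" "1 * t \<le> \<Lambda>^(Suc m) * t"
    using \<Lambda> by (intro mult_right_mono one_le_power; simp)+
  moreover have "\<Lambda>^(Suc m) * t = \<Lambda>^m * (\<Lambda> * t)" by (simp add: mult.assoc mult.commute)
  ultimately have t: "t \<le> T1" "T0 \<le> \<Lambda> * t" "\<Lambda>^m * (\<Lambda> * t) \<le> T1"
    using Suc.prems by linarith+
  have "f t * (1 + \<eta>)^(Suc m) = (f t * (1 + \<eta>)) * (1 + \<eta>)^m" by (simp add: algebra_simps)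
  also have "\<dots> \<le> f (\<Lambda> * t) * (1 + \<eta>)^m"
    using step[OF Suc.prems(1) t(1)] \<eta> by (intro mult_right_mono) auto
  also have "\<dots> \<le> N" using Suc.IH[OF t(2,3)] .
  finally show ?case .
qed

context kmedoids_ahlfors
begin

lemma boundary_subset_bands:
  assumes g: "g < k"
  shows "{i\<in>Cl g. setdist d i ({..<n} - Cl g) \<le> r}
      \<subseteq> (\<Union>h\<in>{..<k} - {g}. band (ms!g) (ms!h) (2*r))"
proof
  fix i assume "i \<in> {i\<in>Cl g. setdist d i ({..<n} - Cl g) \<le> r}"
  then have i: "i \<in> Cl g" "i < n" and sd: "setdist d i ({..<n} - Cl g) \<le> r"
    using cluster_subset[OF g] by auto
  define h0 where "h0 = (if g = 0 then 1 else 0::nat)"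
  have h0: "h0 < k" "h0 \<noteq> g" unfolding h0_def using k_ge_2 g by auto
  have "ms ! h0 \<in> {..<n} - Cl g"
    using medoid_in_cluster[OF h0(1)] cluster_disjoint[OF g h0(1)] medoid_less[OF h0(1)] h0(2) by auto
  then have ne: "{..<n} - Cl g \<noteq> {}" by blast
  have "Min (d i ` ({..<n} - Cl g)) \<le> r"
    using sd ne unfolding setdist_def by (simp add: cInf_eq_Min)
  then obtain j where j: "j < n" "j \<notin> Cl g" "d i j \<le> r" using ne by (auto simp: Min_le_iff)
  obtain h where h: "h < k" "j \<in> Cl h" using ex1_cluster[OF j(1)] by blast
  have "h \<noteq> g" using h j by auto
  have mg: "ms ! g < n" and mh: "ms ! h < n" using medoid_less g h by auto
  have "d (ms ! g) i \<le> d (ms ! h) i" "d (ms ! h) j \<le> d (ms ! g) j"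
    using nearest_medoid g i h by auto
  moreover have "d (ms ! h) i \<le> d (ms ! h) j + d j i" "d (ms ! g) j \<le> d (ms ! g) i + d i j"
    "d j i = d i j"
    using d_triangle[OF mh j(1) i(2)] d_triangle[OF mg i(2) j(1)] d_sym[OF j(1) i(2)] by auto
  ultimately have "\<bar>d (ms ! h) i - d (ms ! g) i\<bar> \<le> 2*r" using j(3) by linarith
  then show "i \<in> (\<Union>h\<in>{..<k} - {g}. band (ms!g) (ms!h) (2*r))"
    unfolding band_def using i(2) h(1) \<open>h \<noteq> g\<close> by auto
qed

lemma min_cluster_card_ge:
  assumes "2*k \<le> n * ball_fraction C e (1/k)"
  shows "cluster_fraction C e k * n \<le> Min ((\<lambda>g. card (Cl g)) ` {..<k})"
proof -
  obtain g where "g \<in> {..<k}" "Min ((\<lambda>g. card (Cl g)) ` {..<k}) = card (Cl g)"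
    using obtains_MIN[OF finite_lessThan lessThan_k_nonempty] .
  then show ?thesis using cluster_card_lower_bound[OF assms] by simp
qed

lemma max_cluster_card_le: "Max ((\<lambda>g. card (Cl g)) ` {..<k}) \<le> n"
proof (rule Max.boundedI)
  show "(\<lambda>g. card (Cl g)) ` {..<k} \<noteq> {}" using lessThan_k_nonempty by blast
  show "c \<le> n" if "c \<in> (\<lambda>g. card (Cl g)) ` {..<k}" for c
    using that cluster_subset card_mono[of "{..<n}"] by fastforce
qed simp

lemma cluster_card_ratio_ge:
  assumes "2*k \<le> n * ball_fraction C e (1/k)"
  shows "cluster_fraction C e k
      \<le> Min ((\<lambda>g. card (Cl g)) ` {..<k}) / Max ((\<lambda>g. card (Cl g)) ` {..<k})"
proof -
  define mi where "mi = real (Min ((\<lambda>g. card (Cl g)) ` {..<k}))"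
  define ma where "ma = real (Max ((\<lambda>g. card (Cl g)) ` {..<k}))"
  have npos: "0 < n" using k_le_n k_ge_2 by simp
  have "mi \<le> ma" unfolding mi_def ma_def using lessThan_k_nonempty by (simp add: Min_le Max_in)
  have mi: "cluster_fraction C e k * n \<le> mi" unfolding mi_def by (rule min_cluster_card_ge[OF assms])
  have ma: "ma \<le> n" unfolding ma_def using max_cluster_card_le by simp
  have c: "0 < cluster_fraction C e k * n" using cluster_fraction_pos C_pos k_ge_2 npos by simp
  have "cluster_fraction C e k = cluster_fraction C e k * n / n" using npos by simp
  also have "\<dots> \<le> cluster_fraction C e k * n / ma"
    using ma mi c \<open>mi \<le> ma\<close> by (intro divide_left_mono) auto
  also have "\<dots> \<le> mi / ma" using mi c \<open>mi \<le> ma\<close> by (intro divide_right_mono) auto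
  finally show ?thesis unfolding mi_def ma_def .
qed

end

context kmedoids_coarse_euclidean
begin

lemma card_medoid_band_iterated:
  assumes large: "large_enough C e k K n" and gh: "g < k" "h < k" "g \<noteq> h"
    and w: "band_min_width (band_angle C e k) K \<le> w"
      "band_growth_factor (band_angle C e k) K ^ m * w
        \<le> band_max_width (separation_const C e k) (band_angle C e k) K (n powr (1/e))"
  shows "card (band (ms!g) (ms!h) w) * (1 + band_growth_rate C e (band_angle C e k) K)^m \<le> n"
proof -
  define \<gamma> where "\<gamma> = band_angle C e k"
  have K0: "0 \<le> K" using K_nonneg k_le_n k_ge_2 by simp
  have \<gamma>: "0 < \<gamma>" unfolding \<gamma>_def using band_angle_pos C_pos k_ge_2 by simp
  show ?thesis
  proof (rule iterated_growth_bound[where f = "\<lambda>t. real (card (band (ms!g) (ms!h) t))"])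
    show "real (card (band (ms!g) (ms!h) t)) \<le> real n" for t
      using card_mono[OF _ band_subset] by simp
    show "1 \<le> band_growth_factor (band_angle C e k) K"
      using one_le_band_growth_factor[OF \<gamma> K0] unfolding \<gamma>_def .
    show "0 \<le> band_growth_rate C e (band_angle C e k) K"
      using band_growth_rate_pos[OF C_pos \<gamma> K0, of e] unfolding \<gamma>_def by simp
    show "0 \<le> band_min_width (band_angle C e k) K"
      using band_min_width_nonneg[OF \<gamma> K0] unfolding \<gamma>_def .
  qed (use card_medoid_band_grows[OF large gh] w in auto)
qed

lemma card_boundary_le:
  assumes large: "large_enough C e k K n" and g: "g < k"
    and m: "band_growth_factor (band_angle C e k) K ^ m * max (2*r) (band_min_width (band_angle C e k) K)
      \<le> band_max_width (separation_const C e k) (band_angle C e k) K (n powr (1/e))"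
  shows "card {i\<in>Cl g. setdist d i ({..<n} - Cl g) \<le> r}
      * (1 + band_growth_rate C e (band_angle C e k) K)^m \<le> (k - 1) * n"
proof -
  define \<eta> where "\<eta> = band_growth_rate C e (band_angle C e k) K"
  define w where "w = max (2*r) (band_min_width (band_angle C e k) K)"
  have K0: "0 \<le> K" using K_nonneg k_le_n k_ge_2 by simp
  have \<eta>: "0 \<le> \<eta>" unfolding \<eta>_def using k_ge_2
    by (intro less_imp_le band_growth_rate_pos C_pos band_angle_pos K0) auto
  have band_card: "card (band (ms!g) (ms!h) w) * (1 + \<eta>)^m \<le> n" if h: "h < k" "h \<noteq> g" for h
    using card_medoid_band_iterated[OF large g h(1) h(2)[symmetric] _ m[folded w_def]]
    unfolding w_def \<eta>_def by simp
  have "band (ms!g) (ms!h) (2*r) \<subseteq> band (ms!g) (ms!h) w" for h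
    unfolding w_def by (rule band_mono) simp
  then have "{i\<in>Cl g. setdist d i ({..<n} - Cl g) \<le> r} \<subseteq> (\<Union>h\<in>{..<k} - {g}. band (ms!g) (ms!h) w)"
    using boundary_subset_bands[OF g, of r] by blast
  then have "card {i\<in>Cl g. setdist d i ({..<n} - Cl g) \<le> r}
      \<le> card (\<Union>h\<in>{..<k} - {g}. band (ms!g) (ms!h) w)"
    using finite_band by (intro card_mono) auto
  also have "\<dots> \<le> (\<Sum>h\<in>{..<k} - {g}. card (band (ms!g) (ms!h) w))" by (rule card_UN_le) simp
  finally have "real (card {i\<in>Cl g. setdist d i ({..<n} - Cl g) \<le> r})
      \<le> (\<Sum>h\<in>{..<k} - {g}. real (card (band (ms!g) (ms!h) w)))"
    by (simp flip: of_nat_sum)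
  then have "card {i\<in>Cl g. setdist d i ({..<n} - Cl g) \<le> r} * (1 + \<eta>)^m
      \<le> (\<Sum>h\<in>{..<k} - {g}. real (card (band (ms!g) (ms!h) w))) * (1 + \<eta>)^m"
    using \<eta> by (intro mult_right_mono) auto
  also have "\<dots> = (\<Sum>h\<in>{..<k} - {g}. card (band (ms!g) (ms!h) w) * (1 + \<eta>)^m)"
    by (simp add: sum_distrib_right)
  also have "\<dots> \<le> (\<Sum>h\<in>{..<k} - {g}. real n)" using band_card by (intro sum_mono) auto
  also have "\<dots> = (k - 1) * n" using g by (simp add: card_Diff_singleton)
  finally show ?thesis unfolding \<eta>_def .
qed

lemma boundary_ratio_le:
  assumes large: "large_enough C e k K n"
    and m: "band_growth_factor (band_angle C e k) K ^ m * max (2*r) (band_min_width (band_angle C e k) K)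
      \<le> band_max_width (separation_const C e k) (band_angle C e k) K (n powr (1/e))"
  shows "Max ((\<lambda>g. card {i\<in>Cl g. setdist d i ({..<n} - Cl g) \<le> r}) ` {..<k})
      / Min ((\<lambda>g. card (Cl g)) ` {..<k})
    \<le> (real k - 1) / (cluster_fraction C e k * (1 + band_growth_rate C e (band_angle C e k) K)^m)"
proof -
  define \<eta> where "\<eta> = band_growth_rate C e (band_angle C e k) K"
  define ma where "ma = real (Max ((\<lambda>g. card {i\<in>Cl g. setdist d i ({..<n} - Cl g) \<le> r}) ` {..<k}))"
  define mi where "mi = real (Min ((\<lambda>g. card (Cl g)) ` {..<k}))"
  have K0: "0 \<le> K" using K_nonneg k_le_n k_ge_2 by simp
  have \<eta>: "0 < (1 + \<eta>)^m"
    unfolding \<eta>_def using k_ge_2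
    by (intro zero_less_power add_pos_pos band_growth_rate_pos C_pos band_angle_pos K0) auto
  have npos: "0 < n" using k_le_n k_ge_2 by simp
  have c: "0 < cluster_fraction C e k * n" using cluster_fraction_pos C_pos k_ge_2 npos by simp
  obtain g where g: "g \<in> {..<k}"
    "Max ((\<lambda>g. card {i\<in>Cl g. setdist d i ({..<n} - Cl g) \<le> r}) ` {..<k})
      = card {i\<in>Cl g. setdist d i ({..<n} - Cl g) \<le> r}"
    using obtains_MAX[OF finite_lessThan lessThan_k_nonempty] .
  have ma: "ma * (1 + \<eta>)^m \<le> (real k - 1) * n"
    using card_boundary_le[OF large _ m, of g] g k_ge_2 unfolding ma_def \<eta>_def by (simp add: of_nat_diff)
  have mi: "cluster_fraction C e k * n \<le> mi"
    unfolding mi_def using min_cluster_card_ge large unfolding large_enough_def by simp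
  have "ma / mi \<le> ma / (cluster_fraction C e k * n)"
    using mi c unfolding ma_def by (intro divide_left_mono) auto
  also have "\<dots> \<le> ((real k - 1) * n / (1 + \<eta>)^m) / (cluster_fraction C e k * n)"
    using ma \<eta> c by (intro divide_right_mono) (auto simp: pos_le_divide_eq)
  also have "\<dots> = (real k - 1) / (cluster_fraction C e k * (1 + \<eta>)^m)"
    using npos by simp
  finally show ?thesis unfolding ma_def mi_def \<eta>_def .
qed

end

lemma card_le_if_fin_ahlfors_regular_PInf:
  assumes ahlfors: "fin_ahlfors_regular {..<n} d C \<infinity>" and C: "0 < C" and n: "0 < n"
  shows "real n \<le> max C 1"
proof -
  have ball: "min (ereal (real n)) (ereal (inverse C) * epow r \<infinity>) \<le> card (mball {..<n} d r 0)"
    "ereal (card (mball {..<n} d r 0)) \<le> max (ereal C * epow r \<infinity>) 1" if "0 < r" for r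
    using ahlfors n that unfolding fin_ahlfors_regular_def by auto
  have "d 0 j \<le> 1" if j: "j < n" for j
  proof (rule ccontr)
    assume "\<not> d 0 j \<le> 1"
    define r where "r = (1 + d 0 j) / 2"
    have r: "1 < r" "r < d 0 j" unfolding r_def using \<open>\<not> d 0 j \<le> 1\<close> by auto
    then have "epow r \<infinity> = \<infinity>" unfolding epow_def by simp
    moreover have "ereal (inverse C) * \<infinity> = \<infinity>" using C by simp
    ultimately have "ereal n \<le> ereal (card (mball {..<n} d r 0))" using ball(1)[of r] r by simp
    then have "n \<le> card (mball {..<n} d r 0)" by simp
    moreover have "mball {..<n} d r 0 \<subseteq> {..<n}" unfolding mball_def by auto
    ultimately have "mball {..<n} d r 0 = {..<n}" by (intro card_seteq) auto
    then have "d 0 j \<le> r" using j unfolding mball_def by auto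
    with r show False by simp
  qed
  then have "mball {..<n} d 1 0 = {..<n}" unfolding mball_def by auto
  moreover have "epow 1 \<infinity> = 1" unfolding epow_def by simp
  ultimately have "ereal n \<le> max (ereal C) 1" using ball(2)[of 1] by simp
  then show ?thesis by (simp add: max_def split: if_splits)
qed

lemma ahlfors_space_if_fin_ahlfors_regular:
  assumes "fin_metric {..<n} d" "fin_ahlfors_regular {..<n} d C (ereal e)" "1 \<le> e" "0 < C"
  shows "ahlfors_space d n C e"
proof
  have epow: "epow r (ereal e) = ereal (r powr e)" for r unfolding epow_def by simp
  show "min (real n) (r powr e / C) \<le> card (mball {..<n} d r i)" if "i < n" "0 < r" for i r
    using assms(2) that unfolding fin_ahlfors_regular_def epow
    by (auto simp: divide_inverse mult.commute min_def split: if_splits)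
  show "card (mball {..<n} d r i) \<le> max (C * r powr e) 1" if "i < n" "0 < r" for i r
    using assms(2) that unfolding fin_ahlfors_regular_def epow
    by (auto simp: max_def split: if_splits)
qed (use assms in auto)

lemma kmedoids_coarse_euclidean_if_kmedoids_output:
  fixes emb :: "nat \<Rightarrow> 'a::real_inner"
  assumes "ahlfors_space d n C e" and "coarse_isometry {..<n} d dist K emb"
    and "\<And>i j a. i \<in> {..<n} \<Longrightarrow> j \<in> {..<n} \<Longrightarrow> 0 \<le> a \<Longrightarrow> a \<le> 1 \<Longrightarrow>
        \<exists>g\<in>{..<n}. \<bar>d i g - a * d i j\<bar> \<le> K \<and> \<bar>d g j - (1 - a) * d i j\<bar> \<le> K"
    and "2 \<le> k" and "kmedoids_output d {..<n} k Cl"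
  obtains ms where "kmedoids_coarse_euclidean d n C e k ms Cl emb K"
proof -
  obtain ms where "length ms = k" "distinct ms" "set ms \<subseteq> {..<n}" "nearest_assignment d {..<n} ms Cl"
    "\<And>g p. g < k \<Longrightarrow> p \<in> {..<n} \<Longrightarrow> p \<notin> set ms \<Longrightarrow>
       (\<Sum>j\<in>{..<n}. point_cost d ms j) \<le> (\<Sum>j\<in>{..<n}. point_cost d (ms[g:=p]) j)"
    using kmedoids_output_swap_optimal[OF assms(5)] assms(4) by auto
  with assms have "kmedoids_coarse_euclidean d n C e k ms Cl emb K"
    unfolding kmedoids_coarse_euclidean_def kmedoids_ahlfors_def kmedoids_ahlfors_axioms_def
      coarse_euclidean_space_def coarse_euclidean_space_axioms_def
    by auto
  then show thesis by (rule that)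
qed

lemma eventually_le_real_powr:
  assumes "0 < a"
  shows "\<forall>\<^sub>F n in sequentially. Z \<le> real n powr a"
proof -
  define z where "z = max Z 1"
  have "z powr (1/a) \<le> real n \<Longrightarrow> Z \<le> real n powr a" for n
    using powr_mono2[of a "z powr (1/a)" "real n"] assms
    by (simp add: z_def powr_powr)
  moreover have "\<forall>\<^sub>F n in sequentially. z powr (1/a) \<le> real n"
    using filterlim_real_sequentially unfolding filterlim_at_top by blast
  ultimately show ?thesis by (auto elim: eventually_mono)
qed

lemma eventually_large_enough:
  assumes C: "0 < C" and e: "0 < e" and k: "0 < k"
  shows "\<forall>\<^sub>F n in sequentially. large_enough C e k K n"
proof -
  have ev: "\<forall>\<^sub>F n in sequentially. A \<le> c * real n powr a" if "0 < c" "0 < a" for A c a :: real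
    using eventually_le_real_powr[OF \<open>0 < a\<close>, of "A / c"] that
    by (auto elim: eventually_mono simp: pos_divide_le_eq mult.commute)
  have lin: "\<forall>\<^sub>F n in sequentially. A \<le> real n * c" if "0 < c" for A c :: real
    using ev[OF that zero_less_one, of A] by (simp add: mult.commute)
  have cf: "0 < cluster_fraction C e k" using cluster_fraction_pos[OF C k] .
  show ?thesis
    unfolding large_enough_def
    using lin[OF ball_fraction_pos[OF _ C], of "1/k" "2*k"] lin[of "cluster_fraction C e k / 2" 1]
      lin[OF ball_fraction_pos[OF cf C], of "2*k"] ev[OF separation_const_pos[OF C k], of "1/e" "4*K"]
      cf k e
    by (intro eventually_conj) (simp_all add: mult.commute)
qed

lemma band_max_width_ge:
  fixes \<gamma> c K A T \<rho> :: real
  defines "B \<equiv> A * (2 + T) + \<gamma> * \<bar>K\<bar> / 16 + 1/2 + 2 * \<bar>K\<bar>"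
  assumes \<gamma>: "0 < \<gamma>" and c: "0 < c" and A: "0 \<le> A" and T: "0 \<le> T"
    and \<rho>: "1 + 2*B/c + 64*B/(\<gamma>*c) \<le> \<rho>"
  shows "A * max (2*\<rho>) T \<le> band_max_width c \<gamma> K (\<rho>^2)"
proof -
  have "0 \<le> B" unfolding B_def using A T \<gamma> by simp
  then have \<rho>1: "1 \<le> \<rho>" "2*B/c \<le> \<rho>" "64*B/(\<gamma>*c) \<le> \<rho>"
    using \<rho> c \<gamma> by (smt (verit) divide_nonneg_pos mult_pos_pos)+
  have "max (2*\<rho>) T \<le> (2 + T) * \<rho>"
    using \<rho>1(1) T mult_left_mono[of 1 \<rho> T] by (simp add: algebra_simps)
  then have "A * max (2*\<rho>) T \<le> A * (2 + T) * \<rho>" using A by (metis mult.assoc mult_left_mono)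
  also have "\<dots> \<le> B * \<rho> - (\<gamma> * \<bar>K\<bar> / 16 + 1/2 + 2 * \<bar>K\<bar>)"
    using mult_left_mono[OF \<rho>1(1), of "\<gamma> * \<bar>K\<bar> / 16 + 1/2 + 2 * \<bar>K\<bar>"] \<gamma>
    unfolding B_def by (simp add: algebra_simps)
  finally have A_le: "A * max (2*\<rho>) T \<le> B * \<rho> - (\<gamma> * \<bar>K\<bar> / 16 + 1/2 + 2 * \<bar>K\<bar>)" .
  have "B * \<rho> \<le> c * \<rho>^2 / 2"
    using mult_right_mono[of B "c * \<rho> / 2" \<rho>] \<rho>1 c by (simp add: field_simps power2_eq_square)
  moreover have "B * \<rho> \<le> \<gamma> * c * \<rho>^2 / 64"
    using mult_right_mono[of B "\<gamma> * c * \<rho> / 64" \<rho>] \<rho>1 c \<gamma> by (simp add: field_simps power2_eq_square)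
  moreover have "\<gamma> * K \<le> \<gamma> * \<bar>K\<bar>" "0 \<le> \<gamma> * \<bar>K\<bar>" using \<gamma> by (auto intro: mult_left_mono)
  moreover have "(\<gamma> * (c * \<rho>^2 / 4 - K) / 8 - 1) / 2 = \<gamma> * c * \<rho>^2 / 64 - \<gamma> * K / 16 - 1/2"
    by (simp add: field_simps)
  ultimately show ?thesis
    using A_le unfolding band_max_width_def min.bounded_iff by (intro conjI) linarith+
qed

lemma eventually_band_max_width_ge:
  assumes "0 < \<gamma>" "0 < c" "0 \<le> A" "0 \<le> T" "0 < e"
  shows "\<forall>\<^sub>F n in sequentially.
    A * max (2 * real n powr (1/(2*e))) T \<le> band_max_width c \<gamma> K (real n powr (1/e))"
proof -
  define B where "B = A * (2 + T) + \<gamma> * \<bar>K\<bar> / 16 + 1/2 + 2 * \<bar>K\<bar>"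
  have sq: "(real n powr (1/(2*e)))^2 = real n powr (1/e)" for n
    by (cases "n = 0") (simp_all add: powr_power)
  have "\<forall>\<^sub>F n in sequentially. 1 + 2*B/c + 64*B/(\<gamma>*c) \<le> real n powr (1/(2*e))"
    using assms(5) by (intro eventually_le_real_powr) simp
  then show ?thesis
  proof (rule eventually_mono)
    fix n assume "1 + 2*B/c + 64*B/(\<gamma>*c) \<le> real n powr (1/(2*e))"
    from band_max_width_ge[OF assms(1-4) this[unfolded B_def]]
    show "A * max (2 * real n powr (1/(2*e))) T \<le> band_max_width c \<gamma> K (real n powr (1/e))"
      by (simp only: sq)
  qed
qed

lemma tendsto_zero_if_eventually_le:
  fixes f :: "nat \<Rightarrow> real"
  assumes le: "\<And>m. \<forall>\<^sub>F n in sequentially. \<bar>f n\<bar> \<le> g m" and g: "g \<longlonglongrightarrow> 0"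
  shows "f \<longlonglongrightarrow> 0"
proof (rule tendstoI)
  fix \<epsilon> :: real assume "0 < \<epsilon>"
  then obtain m where "\<bar>g m\<bar> < \<epsilon>"
    using tendstoD[OF g] eventually_sequentially by fastforce
  then show "\<forall>\<^sub>F n in sequentially. dist (f n) 0 < \<epsilon>"
    using le[of m] by (auto elim: eventually_mono)
qed

lemma fin_ahlfors_regular_exponent_finite:
  assumes "\<And>n. fin_ahlfors_regular {..<n} (d n) C \<delta>" and C: "0 < C" and "1 \<le> \<delta>"
  obtains e where "\<delta> = ereal e" "1 \<le> e"
proof (cases \<delta>)
  case PInf
  define n where "n = nat \<lceil>C\<rceil> + 2"
  have "real n \<le> max C 1"
    using card_le_if_fin_ahlfors_regular_PInf[OF assms(1)[of n, unfolded PInf] C] unfolding n_def by simp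
  then show thesis unfolding n_def by (simp add: max_def split: if_splits; linarith)
qed (use assms in auto)

lemma cluster_ratio_liminf_pos:
  assumes inst: "\<And>n. k \<le> n \<Longrightarrow> \<exists>ms. kmedoids_ahlfors (d n) n C e k ms (Cl n)"
    and C: "0 < C" and e: "0 < e" and k: "0 < k"
  shows "liminf (\<lambda>n. ereal (real (Min ((\<lambda>g. card (Cl n g)) ` {..<k}))
      / real (Max ((\<lambda>g. card (Cl n g)) ` {..<k})))) > 0"
proof -
  have "\<forall>\<^sub>F n in sequentially. ereal (cluster_fraction C e k)
      \<le> ereal (real (Min ((\<lambda>g. card (Cl n g)) ` {..<k})) / real (Max ((\<lambda>g. card (Cl n g)) ` {..<k})))"
    using eventually_large_enough[OF C e k, of 0] eventually_ge_at_top[of k]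
  proof eventually_elim
    case (elim n)
    then obtain ms where "kmedoids_ahlfors (d n) n C e k ms (Cl n)" using inst by blast
    then show ?case using kmedoids_ahlfors.cluster_card_ratio_ge elim(1) unfolding large_enough_def by simp
  qed
  then have "ereal (cluster_fraction C e k) \<le> liminf (\<lambda>n. ereal (real (Min ((\<lambda>g. card (Cl n g)) ` {..<k}))
      / real (Max ((\<lambda>g. card (Cl n g)) ` {..<k}))))"
    by (rule Liminf_bounded)
  then show ?thesis using cluster_fraction_pos[OF C k] by (meson ereal_less(2) less_le_trans)
qed

lemma boundary_ratio_tendsto_zero:
  fixes emb :: "nat \<Rightarrow> nat \<Rightarrow> 'a::real_inner"
  assumes inst: "\<And>n. k \<le> n \<Longrightarrow> \<exists>ms. kmedoids_coarse_euclidean (d n) n C e k ms (Cl n) (emb n) K"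
    and C: "0 < C" and e: "0 < e" and k: "0 < k"
  shows "(\<lambda>n. real (Max ((\<lambda>g. card {i \<in> Cl n g. setdist (d n) i ({..<n} - Cl n g) \<le> n powr (1/(2*e))}) ` {..<k}))
      / real (Min ((\<lambda>g. card (Cl n g)) ` {..<k}))) \<longlonglongrightarrow> 0"
proof (rule tendsto_zero_if_eventually_le)
  define \<gamma> where "\<gamma> = band_angle C e k"
  define \<eta> where "\<eta> = band_growth_rate C e \<gamma> K"
  have \<gamma>: "0 < \<gamma>" unfolding \<gamma>_def using band_angle_pos[OF C k] .
  have K: "0 \<le> K" using inst[OF order_refl] k coarse_euclidean_space.K_nonneg
    unfolding kmedoids_coarse_euclidean_def by blast
  have \<eta>: "0 < \<eta>" unfolding \<eta>_def using band_growth_rate_pos[OF C \<gamma> K] .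
  have "(\<lambda>m. (real k - 1) / cluster_fraction C e k * inverse ((1 + \<eta>)^m)) \<longlonglongrightarrow> 0"
    using \<eta> by (intro tendsto_mult_right_zero LIMSEQ_inverse_realpow_zero) simp
  then show "(\<lambda>m. (real k - 1) / (cluster_fraction C e k * (1 + \<eta>)^m)) \<longlonglongrightarrow> 0"
    by (simp add: field_simps)
  fix m
  have "0 \<le> band_growth_factor \<gamma> K ^ m" using one_le_band_growth_factor[OF \<gamma> K] by simp
  note width = eventually_band_max_width_ge[OF \<gamma> separation_const_pos[OF C k, of e] this
      band_min_width_nonneg[OF \<gamma> K] e, of K]
  show "\<forall>\<^sub>F n in sequentially.
      \<bar>real (Max ((\<lambda>g. card {i \<in> Cl n g. setdist (d n) i ({..<n} - Cl n g) \<le> n powr (1/(2*e))}) ` {..<k}))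
        / real (Min ((\<lambda>g. card (Cl n g)) ` {..<k}))\<bar>
      \<le> (real k - 1) / (cluster_fraction C e k * (1 + \<eta>)^m)"
    using eventually_large_enough[OF C e k, of K] eventually_ge_at_top[of k] width
  proof eventually_elim
    case (elim n)
    then obtain ms where "kmedoids_coarse_euclidean (d n) n C e k ms (Cl n) (emb n) K" using inst by blast
    from kmedoids_coarse_euclidean.boundary_ratio_le[OF this elim(1), where r = "n powr (1/(2*e))"]
    show ?case using elim(3) unfolding \<gamma>_def \<eta>_def by (simp add: mult.commute)
  qed
qed

theorem theorem3:
  fixes d :: "nat \<Rightarrow> nat \<Rightarrow> nat \<Rightarrow> real"
    and C :: real and \<delta> :: ereal and K :: real and k :: nat
    and Cl :: "nat \<Rightarrow> nat \<Rightarrow> nat set"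
    and emb :: "nat \<Rightarrow> nat \<Rightarrow> 'e::euclidean_space"
  assumes C_pos: "0 < C"
    and delta: "1 \<le> \<delta>"
    and metric: "\<And>n. fin_metric {..<n} (d n)"
    and ahlfors: "\<And>n. fin_ahlfors_regular {..<n} (d n) C \<delta>"
    and embed: "\<And>n. coarse_isometry {..<n} (d n) dist K (emb n)"
    and interp: "\<And>n i j a. i \<in> {..<n} \<Longrightarrow> j \<in> {..<n} \<Longrightarrow> 0 \<le> a \<Longrightarrow> a \<le> 1 \<Longrightarrow>
        \<exists>g\<in>{..<n}. \<bar>d n i g - a * d n i j\<bar> \<le> K \<and> \<bar>d n g j - (1 - a) * d n i j\<bar> \<le> K"
    and k2: "2 \<le> k"
    and kmed: "\<And>n. k \<le> n \<Longrightarrow> kmedoids_output (d n) {..<n} k (Cl n)"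
  shows "(liminf (\<lambda>n. ereal (real (Min ((\<lambda>g. card (Cl n g)) ` {..<k}))
                          / real (Max ((\<lambda>g. card (Cl n g)) ` {..<k})))) > 0) \<and>
         (\<exists>rb :: nat \<Rightarrow> real. mono rb \<and> filterlim rb at_top sequentially \<and>
          ((\<lambda>n. real (Max ((\<lambda>g. card {i \<in> Cl n g. setdist (d n) i ({..<n} - Cl n g) \<le> rb n}) ` {..<k}))
                / real (Min ((\<lambda>g. card (Cl n g)) ` {..<k}))) \<longlonglongrightarrow> 0))"
proof -
  obtain e where \<delta>: "\<delta> = ereal e" and e: "1 \<le> e"
    using fin_ahlfors_regular_exponent_finite[OF ahlfors C_pos delta] by blast
  have k: "0 < k" and e_pos: "0 < e" using k2 e by auto
  have inst: "\<exists>ms. kmedoids_coarse_euclidean (d n) n C e k ms (Cl n) (emb n) K" if "k \<le> n" for n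
  proof (rule kmedoids_coarse_euclidean_if_kmedoids_output)
    show "ahlfors_space (d n) n C e"
      using ahlfors_space_if_fin_ahlfors_regular[OF metric ahlfors[unfolded \<delta>] e C_pos] .
  qed (use embed interp k2 kmed that in auto)
  then have "\<exists>ms. kmedoids_ahlfors (d n) n C e k ms (Cl n)" if "k \<le> n" for n
    using that kmedoids_coarse_euclidean.axioms(1) by blast
  note part1 = cluster_ratio_liminf_pos[OF this C_pos e_pos k]
  define rb where "rb n = real n powr (1/(2*e))" for n :: nat
  have "mono rb" unfolding rb_def mono_def using e_pos by (auto intro: powr_mono2)
  moreover have "filterlim rb at_top sequentially"
    unfolding rb_def filterlim_at_top using e_pos by (auto intro: eventually_le_real_powr)
  moreover note boundary_ratio_tendsto_zero[OF inst C_pos e_pos k, folded rb_def]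
  ultimately show ?thesis using part1 by blast
qed

end
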